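(* Let $\mathrm{char}(K)=0$, $k\ge2$ an integer, and let $h_n$ be the homogeneous component of degree $n$ of $\mathrm{Log}_k(1+x)$. Then $h_0=0$ and $$\frac{d}{dx}h_{n+1}=-n\,h_n\quad\text{for all } n\ge1.$$
   Context: Let $K$ be a field of characteristic $0$ and let $x\neq y$ be two symbols. A finite planar reduced rooted tree is a finite rooted tree in which the children of each vertex are linearly ordered and no vertex has exactly one child; its leaves are the vertices without children. $P(x,y)$ is the set of isomorphism classes of pairs $S=(T,\lambda)$, $T$ a finite planar reduced rooted tree, $\lambda:L(T)\to\{x,y\}$ a labeling of its leaves; $\deg_x(S)=\#\lambda^{-1}(x)$, $\deg S=\#L(T)$. $P'(x,y)=P(x,y)\cup\{1_P\}$ with $1_P$ the empty tree (degree 0). For $m\ge2$, $\bullet_m(S_1,\dots,S_m)$ is the tree with a new root whose ordered children are the roots of $S_1,\dots,S_m$, labelings inherited; on $P'(x,y)$ occurrences of $1_P$ are deleted, with $\bullet_1(S)=S$, $\bullet_0()=1_P$. $K\{\{x,y\}$: all $f=\sum_{S\in P'(x,y)}c_S(f)S$ such that for each $n$ only finitely many $S$ with $\deg_x(S)=n$ have $c_S(f)\ne0$; products $f_1\cdot\ldots\cdot f_m=\bullet_m(f_1,\dots,f_m)$ with $c_S(f_1\cdot\ldots\cdot f_m)=\sum_{\bullet_m(S_1,\dots,S_m)=S}c_{S_1}(f_1)\cdots c_{S_m}(f_m)$; $x$-adic topology from $\mathrm{ord}_x(f)=\min\{\deg_x S:c_S(f)\ne0\}$. $K\{\{x\}\}$: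 series supported on $1_P$ and trees with all leaves labeled $x$; we write $1=1_P$; the homogeneous component of degree $n$ of $f$ is the sum of its terms supported on trees with $n$ leaves. For $g,h\in K\{\{x,y\}$ with $\mathrm{ord}_x(g)\ge1$, $\varphi_{(g,h)}$ denotes the unique $x$-adically continuous $K$-linear map preserving $1_P$ and all $\bullet_m$ with $x\mapsto g$, $y\mapsto h$; for $f\in K\{\{x\}\}$, $f(g(x))$ denotes $\varphi_{(g,h)}(f)$. The universal derivation $d:K\{\{x\}\}\to K\{\{x,y\}$ is the continuous $K$-linear map with $d(1_P)=0$ and, for a tree $S=(T,\lambda)$ with all leaves $l_1,\dots,l_m$ labeled $x$, $d(S)=\sum_{i=1}^m(T,\lambda^{(i)})$ with $\lambda^{(i)}$ labeling $l_i$ by $y$ and the other leaves by $x$. The derivative is $\frac{d}{dx}:=\varphi_{(x,1)}\circ d$. For an integer $k\ge2$, the $k$-ary planar exponential series $\mathrm{Exp}_k(x)=\sum_{n\ge0}f_n$ ($f_n$ homogeneous of degree $n$) is the unique series in $K\{\{x\}\}$ with $f_0=1$, $f_1=x$ and $k^nf_n=\sum_{i_1+\dots+i_k=n}f_{i_1}\cdot\ldots\cdot f_{i_k}$ ($k$-ary products) for all $n$. The $k$-ary planar logarithm $\mathrm{Log}_k(1+x)$ is the series $h\in K\{\{x\}\}$ with zero constant term (coefficient of $1_P$) which is inverse to $\mathrm{Exp}_k(x)-1$ under substitution: $h(\mathrm{Exp}_k(x)-1)=x$. *)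

theory Defs
  imports Main
begin

datatype lbl = X | Y

(* Planar rooted trees with labelled leaves.  The empty tree 1_P is represented
   by Node [] ; genuine (reduced) trees have every inner node with >= 2 children. *)
datatype ptree = Leaf lbl | Node "ptree list"

definition oneP :: ptree where "oneP = Node []"

fun reduced :: "ptree \<Rightarrow> bool" where
  "reduced (Leaf a) = True"
| "reduced (Node ts) = (2 \<le> length ts \<and> (\<forall>t\<in>set ts. reduced t))"

definition valid :: "ptree \<Rightarrow> bool" where
  "valid S \<longleftrightarrow> S = oneP \<or> reduced S"

fun nleaves :: "ptree \<Rightarrow> nat" where
  "nleaves (Leaf a) = 1"
| "nleaves (Node ts) = sum_list (map nleaves ts)"

fun degx :: "ptree \<Rightarrow> nat" where
  "degx (Leaf a) = (if a = X then 1 else 0)"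
| "degx (Node ts) = sum_list (map degx ts)"

fun allx :: "ptree \<Rightarrow> bool" where
  "allx (Leaf a) = (a = X)"
| "allx (Node ts) = (\<forall>t\<in>set ts. allx t)"

definition bullet :: "ptree list \<Rightarrow> ptree" where
  "bullet ss = (let ts = filter (\<lambda>s. s \<noteq> oneP) ss in
     if ts = [] then oneP else if length ts = 1 then hd ts else Node ts)"

type_synonym 'a ser = "ptree \<Rightarrow> 'a"

definition series :: "'a::zero ser \<Rightarrow> bool" where
  "series f \<longleftrightarrow> (\<forall>T. f T \<noteq> 0 \<longrightarrow> valid T) \<and> (\<forall>n. finite {T. degx T = n \<and> f T \<noteq> 0})"

definition xseries :: "'a::zero ser \<Rightarrow> bool" where
  "xseries f \<longleftrightarrow> series f \<and> (\<forall>T. f T \<noteq> 0 \<longrightarrow> allx T)"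

definition one_ser :: "'a::{zero,one} ser" where
  "one_ser = (\<lambda>T. if T = oneP then 1 else 0)"

definition x_ser :: "'a::{zero,one} ser" where
  "x_ser = (\<lambda>T. if T = Leaf X then 1 else 0)"

definition y_ser :: "'a::{zero,one} ser" where
  "y_ser = (\<lambda>T. if T = Leaf Y then 1 else 0)"

definition prodm :: "'a::comm_semiring_1 ser list \<Rightarrow> 'a ser" where
  "prodm fs S = (\<Sum>ss\<in>{ss. length ss = length fs \<and> (\<forall>s\<in>set ss. valid s) \<and> bullet ss = S}.
       \<Prod>i<length fs. (fs ! i) (ss ! i))"

definition hcomp :: "nat \<Rightarrow> 'a::zero ser \<Rightarrow> 'a ser" where
  "hcomp n f = (\<lambda>T. if nleaves T = n then f T else 0)"

fun phi_tree :: "'a::comm_semiring_1 ser \<Rightarrow> 'a ser \<Rightarrow> ptree \<Rightarrow> 'a ser" where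
  "phi_tree g h (Leaf a) = (if a = X then g else h)"
| "phi_tree g h (Node ts) = prodm (map (phi_tree g h) ts)"

(* \<phi>_(g,h)(f), the x-adically continuous extension: coefficientwise a finite sum *)
definition subst :: "'a::comm_semiring_1 ser \<Rightarrow> 'a ser \<Rightarrow> 'a ser \<Rightarrow> 'a ser" where
  "subst g h f = (\<lambda>T. \<Sum>S\<in>{S. f S * phi_tree g h S T \<noteq> 0}. f S * phi_tree g h S T)"

(* all trees obtained by relabelling exactly one x-leaf by y (with multiplicity) *)
fun relabels :: "ptree \<Rightarrow> ptree list" and relabelsl :: "ptree list \<Rightarrow> ptree list list" where
  "relabels (Leaf a) = (if a = X then [Leaf Y] else [])"
| "relabels (Node ts) = map Node (relabelsl ts)"
| "relabelsl [] = []"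
| "relabelsl (t # ts) = map (\<lambda>t'. t' # ts) (relabels t) @ map (\<lambda>us. t # us) (relabelsl ts)"

definition dser :: "'a::comm_semiring_1 ser \<Rightarrow> 'a ser" where
  "dser f = (\<lambda>T. \<Sum>S\<in>{S. f S \<noteq> 0 \<and> T \<in> set (relabels S)}. f S * of_nat (count_list (relabels S) T))"

definition dx :: "'a::comm_semiring_1 ser \<Rightarrow> 'a ser" where
  "dx f = subst x_ser one_ser (dser f)"

definition is_Exp :: "nat \<Rightarrow> 'a::field_char_0 ser \<Rightarrow> bool" where
  "is_Exp k E \<longleftrightarrow> xseries E \<and> hcomp 0 E = one_ser \<and> hcomp 1 E = x_ser \<and>
     (\<forall>n. (\<lambda>T. of_nat k ^ n * hcomp n E T) =
          (\<lambda>T. \<Sum>is\<in>{is. length is = k \<and> sum_list is = n}. prodm (map (\<lambda>i. hcomp i E) is) T))"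

definition is_Log :: "nat \<Rightarrow> 'a::field_char_0 ser \<Rightarrow> 'a ser \<Rightarrow> bool" where
  "is_Log k E h \<longleftrightarrow> xseries h \<and> h oneP = 0 \<and>
     subst (\<lambda>T. E T - one_ser T) y_ser h = x_ser"

end

theory Submission
  imports Defs
begin

(* The components f_n of Exp_k satisfy d/dx f_(m+1) = f_m, so U = Exp_k(x) - 1 satisfies
   d/dx U = 1 + U.  Differentiating Log_k(1 + U) = x with the chain rule then gives
   (d/dx h + euler h)(U) = 1, where euler multiplies the degree-n part by n.  Substituting
   U = x + (higher terms) is injective, so d/dx h + euler h = 1, and its component of degree
   n >= 1 is the claim.  Series are truncated to polynomials in the degrees that matter, so
   that substitution and d/dx are finite sums commuting with products. *)

section \<open>Trees and the grafting operation\<close>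

lemma nleaves_oneP [simp]: "nleaves oneP = 0"
  and allx_oneP [simp]: "allx oneP"
  and valid_oneP [simp]: "valid oneP"
  by (auto simp: oneP_def valid_def)

lemma reduced_nleaves_pos: "reduced T \<Longrightarrow> 0 < nleaves T"
proof (induction T)
  case (Node ts)
  then obtain t where t: "t \<in> set ts" and "0 < nleaves t"
    by (cases ts) auto
  moreover have "nleaves t \<le> sum_list (map nleaves ts)"
    using t by (simp add: member_le_sum_list)
  ultimately show ?case by simp
qed simp

lemma valid_nleaves_eq_0: "valid T \<Longrightarrow> nleaves T = 0 \<Longrightarrow> T = oneP"
  using reduced_nleaves_pos valid_def by fastforce

lemma valid_NodeD:
  assumes "valid (Node ts)" and "ts \<noteq> []"
  shows "2 \<le> length ts" and "\<forall>t\<in>set ts. valid t \<and> t \<noteq> oneP"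
  using assms by (auto simp: valid_def oneP_def)

lemma allx_degx_eq_nleaves: "allx T \<Longrightarrow> degx T = nleaves T"
proof (induction T)
  case (Node ts)
  then have "map degx ts = map nleaves ts" by auto
  then show ?case by (metis degx.simps(2) nleaves.simps(2))
qed simp

abbreviation strip_oneP :: "ptree list \<Rightarrow> ptree list" where
  "strip_oneP ss \<equiv> filter (\<lambda>s. s \<noteq> oneP) ss"

lemma bullet_cases:
  obtains "strip_oneP ss = []" "bullet ss = oneP"
  | t where "strip_oneP ss = [t]" "bullet ss = t"
  | "2 \<le> length (strip_oneP ss)" "bullet ss = Node (strip_oneP ss)"
proof -
  consider "length (strip_oneP ss) = 0" | "length (strip_oneP ss) = 1" | "2 \<le> length (strip_oneP ss)"
    by linarith
  then show ?thesis
  proof cases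
    case 1
    then show ?thesis by (intro that(1)) (simp_all add: bullet_def)
  next
    case 2
    then obtain t where "strip_oneP ss = [t]" by (auto simp: length_Suc_conv)
    then show ?thesis by (simp add: bullet_def that(2))
  next
    case 3
    then show ?thesis by (intro that(3)) (auto simp: bullet_def Let_def)
  qed
qed

lemma strip_oneP_single_in_set:
  assumes "strip_oneP ss = [t]"
  shows "t \<in> set ss"
proof -
  have "t \<in> set (strip_oneP ss)" using assms by simp
  then show ?thesis by simp
qed

lemma bullet_Nil [simp]: "bullet [] = oneP"
  and bullet_single [simp]: "bullet [s] = s"
  and bullet_append_oneP: "bullet (A @ oneP # B) = bullet (A @ B)"
  by (simp_all add: bullet_def)

lemma bullet_eq_Node:
  assumes "\<forall>s\<in>set ss. s \<noteq> oneP" and "2 \<le> length ss"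
  shows "bullet ss = Node ss"
proof -
  have "strip_oneP ss = ss" using assms(1) by (simp add: filter_id_conv)
  then show ?thesis using assms(2) by (cases ss rule: bullet_cases) auto
qed

lemma nleaves_bullet: "nleaves (bullet ss) = sum_list (map nleaves ss)"
proof -
  have "sum_list (map nleaves (strip_oneP ss)) = sum_list (map nleaves ss)"
    by (rule sum_list_map_filter) auto
  then show ?thesis by (cases ss rule: bullet_cases) auto
qed

lemma valid_bullet: "\<forall>s\<in>set ss. valid s \<Longrightarrow> valid (bullet ss)"
  by (cases ss rule: bullet_cases) (auto dest: strip_oneP_single_in_set simp: valid_def)

lemma allx_bullet: "\<forall>s\<in>set ss. allx s \<Longrightarrow> allx (bullet ss)"
  by (cases ss rule: bullet_cases) (auto dest: strip_oneP_single_in_set)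

lemma mem_bullet_subtrees:
  assumes "s \<in> set ss" and "s \<noteq> oneP"
  shows "s = bullet ss \<or> s \<in> (case bullet ss of Node ts \<Rightarrow> set ts | Leaf _ \<Rightarrow> {})"
proof (cases ss rule: bullet_cases)
  case (2 t)
  have "s \<in> set (strip_oneP ss)" using assms by simp
  then show ?thesis using 2 by simp
qed (use assms in \<open>auto simp: filter_empty_conv\<close>)

definition factorizations :: "nat \<Rightarrow> ptree \<Rightarrow> ptree list set" where
  "factorizations m T = {ss. length ss = m \<and> (\<forall>s\<in>set ss. valid s) \<and> bullet ss = T}"

lemma factorizationsD:
  assumes "ss \<in> factorizations m T"
  shows "length ss = m" and "s \<in> set ss \<Longrightarrow> valid s" and "bullet ss = T"
  using assms by (auto simp: factorizations_def)

lemma finite_factorizations: "finite (factorizations m T)"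
proof -
  let ?C = "insert oneP (insert T (case T of Node ts \<Rightarrow> set ts | Leaf _ \<Rightarrow> {}))"
  have "factorizations m T \<subseteq> {ss. set ss \<subseteq> ?C \<and> length ss = m}"
    using mem_bullet_subtrees by (fastforce simp: factorizations_def)
  moreover have "finite {ss. set ss \<subseteq> ?C \<and> length ss = m}"
    by (rule finite_lists_length_eq) (simp split: ptree.split)
  ultimately show ?thesis by (rule finite_subset)
qed

lemma factorization_nleaves_le:
  assumes "ss \<in> factorizations m T" and "i < length ss"
  shows "nleaves (ss ! i) \<le> nleaves T"
proof -
  have "nleaves (ss ! i) \<le> sum_list (map nleaves ss)"
    using assms(2) by (intro member_le_sum_list) auto
  then show ?thesis using nleaves_bullet[of ss] factorizationsD(3)[OF assms(1)] by simp
qed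

section \<open>Products of series\<close>

definition delta :: "ptree \<Rightarrow> 'a::{zero,one} ser" where
  "delta S = (\<lambda>T. if T = S then 1 else 0)"

lemma delta_same [simp]: "delta S S = 1"
  by (simp add: delta_def)

lemma x_ser_eq_delta: "x_ser = delta (Leaf X)"
  and y_ser_eq_delta: "y_ser = delta (Leaf Y)"
  and one_ser_eq_delta: "one_ser = delta oneP"
  by (auto simp: x_ser_def y_ser_def one_ser_def delta_def)

abbreviation prod_apply :: "'a::comm_monoid_mult ser list \<Rightarrow> ptree list \<Rightarrow> 'a" where
  "prod_apply fs ss \<equiv> prod_list (map2 (\<lambda>f s. f s) fs ss)"

lemma prod_apply_eq_prod_nth:
  "length ss = length fs \<Longrightarrow> prod_apply fs ss = (\<Prod>i<length fs. (fs ! i) (ss ! i))"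
proof (induction fs arbitrary: ss)
  case (Cons f fs)
  then obtain s ss' where "ss = s # ss'" by (cases ss) auto
  with Cons show ?case by (simp add: prod.lessThan_Suc_shift del: prod.lessThan_Suc)
qed simp

lemma prod_apply_append:
  "length ss = length A \<Longrightarrow> prod_apply (A @ B) (ss @ ss') = prod_apply A ss * prod_apply B ss'"
  by (simp add: zip_append)

lemma prod_apply_eq_0:
  assumes "length ss = length fs" and "i < length fs" and "(fs ! i) (ss ! i) = (0::'a::comm_semiring_1)"
  shows "prod_apply fs ss = 0"
  using assms by (simp add: prod_apply_eq_prod_nth) (metis finite_lessThan lessThan_iff prod_zero)

lemma prod_apply_map_delta:
  "length ss' = length ss \<Longrightarrow>
    prod_apply (map delta ss) ss' = (if ss' = ss then 1 else (0::'a::comm_semiring_1))"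
proof (induction ss arbitrary: ss')
  case (Cons s ss)
  then obtain s' ss'' where "ss' = s' # ss''" by (cases ss') auto
  with Cons show ?case by (auto simp: delta_def)
qed simp

lemma prodm_eq_sum_factorizations:
  "prodm fs T = (\<Sum>ss\<in>factorizations (length fs) T. \<Prod>i<length fs. (fs ! i) (ss ! i))"
  unfolding prodm_def factorizations_def by simp

lemma prodm_eq_sum_prod_apply:
  "prodm fs T = (\<Sum>ss\<in>factorizations (length fs) T. prod_apply fs ss)"
  unfolding prodm_eq_sum_factorizations
  by (rule sum.cong) (auto simp: prod_apply_eq_prod_nth factorizations_def)

lemma prodm_Nil: "prodm [] = one_ser"
proof
  fix T
  have "factorizations 0 T = (if T = oneP then {[]} else {})"
    by (auto simp: factorizations_def)
  then show "prodm [] T = one_ser T" by (simp add: prodm_eq_sum_prod_apply one_ser_def)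
qed

lemma prodm_single: "prodm [g] = (\<lambda>T. if valid T then g T else 0)"
proof
  fix T
  have "factorizations 1 T = (if valid T then {[T]} else {})"
    by (auto simp: factorizations_def length_Suc_conv)
  then show "prodm [g] T = (if valid T then g T else 0)" by (simp add: prodm_eq_sum_prod_apply)
qed

lemma prodm_nonzero_factorization:
  assumes "prodm fs T \<noteq> (0::'a::comm_semiring_1)"
  obtains ss where "ss \<in> factorizations (length fs) T"
    "\<And>i. i < length fs \<Longrightarrow> (fs ! i) (ss ! i) \<noteq> 0"
proof -
  from assms obtain ss where "ss \<in> factorizations (length fs) T"
      "(\<Prod>i<length fs. (fs ! i) (ss ! i)) \<noteq> 0"
    unfolding prodm_eq_sum_factorizations by (rule sum.not_neutral_contains_not_neutral)
  then show ?thesis by (metis that finite_lessThan lessThan_iff prod_zero)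
qed

lemma prodm_nonzero_valid: "prodm fs T \<noteq> 0 \<Longrightarrow> valid T"
  by (erule prodm_nonzero_factorization) (auto simp: factorizations_def intro: valid_bullet)

lemma prodm_map_delta:
  assumes "\<forall>s\<in>set ss. valid s"
  shows "prodm (map delta ss) = (delta (bullet ss) :: 'a::comm_semiring_1 ser)"
proof
  fix T
  have "prodm (map delta ss) T = (\<Sum>ss'\<in>factorizations (length ss) T. if ss' = ss then (1::'a) else 0)"
    unfolding prodm_eq_sum_prod_apply
    by (rule sum.cong) (auto simp: factorizations_def prod_apply_map_delta)
  also have "\<dots> = delta (bullet ss) T"
    using assms finite_factorizations by (auto simp: sum.delta' factorizations_def delta_def)
  finally show "prodm (map delta ss) T = (delta (bullet ss) :: 'a ser) T" .
qed

lemma factorizations_insert_oneP: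
  assumes "i \<le> m"
  shows "bij_betw (\<lambda>ss. take i ss @ oneP # drop i ss)
           (factorizations m T) {ss \<in> factorizations (Suc m) T. ss ! i = oneP}"
proof (rule bij_betw_byWitness[where f' = "\<lambda>ss. take i ss @ drop (Suc i) ss"])
  show "\<forall>ss\<in>factorizations m T. take i (take i ss @ oneP # drop i ss) @
          drop (Suc i) (take i ss @ oneP # drop i ss) = ss"
    using assms by (auto simp: factorizations_def min_absorb2)
  show "\<forall>ss\<in>{ss \<in> factorizations (Suc m) T. ss ! i = oneP}.
          take i (take i ss @ drop (Suc i) ss) @ oneP # drop i (take i ss @ drop (Suc i) ss) = ss"
    using assms by (auto simp: factorizations_def min_absorb2) (metis id_take_nth_drop le_imp_less_Suc)
  show "(\<lambda>ss. take i ss @ oneP # drop i ss) ` factorizations m T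
          \<subseteq> {ss \<in> factorizations (Suc m) T. ss ! i = oneP}"
    using assms set_take_subset set_drop_subset
    by (fastforce simp: factorizations_def nth_append min_absorb2 bullet_append_oneP)
  show "(\<lambda>ss. take i ss @ drop (Suc i) ss) ` {ss \<in> factorizations (Suc m) T. ss ! i = oneP}
          \<subseteq> factorizations m T"
  proof clarify
    fix ss assume ss: "ss \<in> factorizations (Suc m) T" "ss ! i = oneP"
    then have "ss = take i ss @ oneP # drop (Suc i) ss"
      using assms factorizationsD(1) by (metis id_take_nth_drop le_imp_less_Suc)
    then have "bullet (take i ss @ drop (Suc i) ss) = T"
      using ss(1) by (metis bullet_append_oneP factorizationsD(3))
    then show "take i ss @ drop (Suc i) ss \<in> factorizations m T"
      using ss(1) assms by (auto simp: factorizations_def dest: in_set_takeD in_set_dropD)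
  qed
qed

(* Only factorizations with oneP in the slot of one_ser contribute, and deleting that entry
   is a bijection onto the factorizations without the slot. *)
lemma prodm_insert_one_ser:
  "prodm (A @ one_ser # B) = (prodm (A @ B) :: 'a::comm_semiring_1 ser)"
proof
  fix T
  let ?m = "length A + length B" and ?i = "length A"
  let ?ins = "\<lambda>ss. take ?i ss @ oneP # drop ?i ss"
  have "prodm (A @ one_ser # B) T = (\<Sum>ss\<in>factorizations (Suc ?m) T. prod_apply (A @ one_ser # B) ss)"
    by (simp add: prodm_eq_sum_prod_apply)
  also have "\<dots> = (\<Sum>ss\<in>{ss \<in> factorizations (Suc ?m) T. ss ! ?i = oneP}.
        prod_apply (A @ one_ser # B) ss)"
    by (rule sum.mono_neutral_right[OF finite_factorizations])
       (auto simp: factorizations_def one_ser_def nth_append intro!: prod_apply_eq_0[where i = ?i])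
  also have "\<dots> = (\<Sum>ss\<in>factorizations ?m T. prod_apply (A @ one_ser # B) (?ins ss))"
    by (rule sum.reindex_bij_betw[OF factorizations_insert_oneP, symmetric]) simp
  also have "\<dots> = (\<Sum>ss\<in>factorizations ?m T. prod_apply (A @ B) ss)"
  proof (rule sum.cong)
    fix ss assume "ss \<in> factorizations ?m T"
    then have l: "length ss = ?m" by (simp add: factorizations_def)
    then have "prod_apply (A @ one_ser # B) (?ins ss) = prod_apply A (take ?i ss) * prod_apply B (drop ?i ss)"
      by (simp add: prod_apply_append one_ser_def)
    also have "\<dots> = prod_apply (A @ B) ss"
      using l prod_apply_append[of "take ?i ss" A B "drop ?i ss"] by simp
    finally show "prod_apply (A @ one_ser # B) (?ins ss) = prod_apply (A @ B) ss" .
  qed simp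
  finally show "prodm (A @ one_ser # B) T = prodm (A @ B) T"
    by (simp add: prodm_eq_sum_prod_apply)
qed

lemma prodm_Cons_one_ser: "prodm (one_ser # B) = (prodm B :: 'a::comm_semiring_1 ser)"
  using prodm_insert_one_ser[of "[]"] by simp

lemma prodm_insert_zero: "prodm (A @ (\<lambda>_. 0) # B) = (\<lambda>_. 0 :: 'a::comm_semiring_1)"
  by (rule ext, unfold prodm_eq_sum_prod_apply, rule sum.neutral)
     (auto simp: factorizations_def nth_append intro!: prod_apply_eq_0[where i = "length A"])

lemma prodm_update_zero:
  "i < length fs \<Longrightarrow> prodm (fs[i := (\<lambda>_. 0)]) = (\<lambda>_. 0 :: 'a::comm_semiring_1)"
  by (simp add: upd_conv_take_nth_drop prodm_insert_zero)

lemma prodm_replicate_one_ser: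
  "prodm (replicate q one_ser @ A @ replicate r one_ser) = (prodm A :: 'a::comm_semiring_1 ser)"
proof -
  have "prodm (A @ replicate r one_ser) = prodm A"
    by (induction r) (simp_all add: prodm_insert_one_ser)
  moreover have "prodm (replicate q one_ser @ C) = prodm C" for C :: "'a ser list"
    by (induction q) (simp_all add: prodm_Cons_one_ser)
  ultimately show ?thesis by simp
qed

lemma prodm_strip_oneP:
  assumes "F oneP = one_ser"
  shows "prodm (A @ map F ss) = (prodm (A @ map F (strip_oneP ss)) :: 'a::comm_semiring_1 ser)"
proof (induction ss arbitrary: A)
  case (Cons s ss)
  show ?case
  proof (cases "s = oneP")
    case True
    then show ?thesis
      using assms Cons[of A] prodm_insert_one_ser[of A "map F ss"] by simp
  next
    case False
    then show ?thesis using Cons[of "A @ [F s]"] by simp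
  qed
qed simp

lemma prod_sum_eq_sum_lists:
  assumes "finite A"
  shows "(\<Prod>i<n. \<Sum>s\<in>A. F i s) =
    (\<Sum>ss\<in>{ss. set ss \<subseteq> A \<and> length ss = n}. \<Prod>i<n. F i (ss ! i) :: 'a::comm_semiring_1)"
proof (induction n arbitrary: F)
  case 0
  have "{ss. set ss \<subseteq> A \<and> length ss = 0} = {[]}" by auto
  then show ?case by simp
next
  case (Suc n)
  let ?L = "\<lambda>n. {ss. set ss \<subseteq> A \<and> length ss = n}"
  have img: "?L (Suc n) = (\<lambda>(s, ss). s # ss) ` (A \<times> ?L n)"
    by (auto simp: length_Suc_conv image_iff)
  have inj: "inj_on (\<lambda>(s, ss). s # ss) (A \<times> ?L n)" by (auto simp: inj_on_def)
  have "(\<Prod>i<Suc n. \<Sum>s\<in>A. F i s) = (\<Sum>s\<in>A. F 0 s) * (\<Prod>i<n. \<Sum>s\<in>A. F (Suc i) s)"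
    by (rule prod.lessThan_Suc_shift)
  also have "\<dots> = (\<Sum>(s, ss)\<in>A \<times> ?L n. F 0 s * (\<Prod>i<n. F (Suc i) (ss ! i)))"
    using Suc[of "\<lambda>i. F (Suc i)"] by (simp add: sum_product sum.cartesian_product)
  also have "\<dots> = (\<Sum>ss\<in>?L (Suc n). \<Prod>i<Suc n. F i (ss ! i))"
    unfolding img sum.reindex[OF inj]
    by (rule sum.cong) (auto simp: prod.lessThan_Suc_shift simp del: prod.lessThan_Suc)
  finally show ?case .
qed

lemma map_nth_upt: "length xs = n \<Longrightarrow> map (\<lambda>i. f (xs ! i)) [0..<n] = map f xs"
  by (intro nth_equalityI) auto

lemma prodm_multilinear:
  assumes "finite A" and "length gs = length fs"
    and "\<And>i. i < length fs \<Longrightarrow> gs ! i = (\<lambda>T. \<Sum>s\<in>A. (fs ! i) s * G i s T)"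
  shows "prodm gs T = (\<Sum>ss\<in>{ss. set ss \<subseteq> A \<and> length ss = length fs}.
           prod_apply fs ss * prodm (map (\<lambda>i. G i (ss ! i)) [0..<length fs]) T :: 'a::comm_semiring_1)"
proof -
  let ?n = "length fs"
  let ?L = "{ss. set ss \<subseteq> A \<and> length ss = ?n}"
  have "prodm gs T = (\<Sum>ss'\<in>factorizations ?n T. \<Prod>i<?n. \<Sum>s\<in>A. (fs ! i) s * G i s (ss' ! i))"
    unfolding prodm_eq_sum_factorizations assms(2) by (rule sum.cong) (auto simp: assms(3))
  also have "\<dots> = (\<Sum>ss'\<in>factorizations ?n T. \<Sum>ss\<in>?L.
                    (\<Prod>i<?n. (fs ! i) (ss ! i)) * (\<Prod>i<?n. G i (ss ! i) (ss' ! i)))"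
    using assms(1) by (simp add: prod_sum_eq_sum_lists prod.distrib)
  also have "\<dots> = (\<Sum>ss\<in>?L. (\<Prod>i<?n. (fs ! i) (ss ! i)) * prodm (map (\<lambda>i. G i (ss ! i)) [0..<?n]) T)"
    by (subst sum.swap) (simp add: prodm_eq_sum_factorizations sum_distrib_left)
  also have "\<dots> = (\<Sum>ss\<in>?L. prod_apply fs ss * prodm (map (\<lambda>i. G i (ss ! i)) [0..<?n]) T)"
    by (intro sum.cong refl) (simp add: prod_apply_eq_prod_nth)
  finally show ?thesis .
qed

lemma prodm_update_sum:
  assumes "i < length fs" and "finite J"
  shows "prodm (fs[i := (\<lambda>T. \<Sum>j\<in>J. c j * g j T)]) T =
    (\<Sum>j\<in>J. c j * prodm (fs[i := g j]) T :: 'a::comm_semiring_1)"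
proof -
  let ?n = "length fs"
  let ?R = "\<lambda>ss. \<Prod>k\<in>{..<?n} - {i}. (fs ! k) (ss ! k)"
  have upd: "(\<Prod>k<?n. (fs[i := h] ! k) (ss ! k)) = h (ss ! i) * ?R ss" for h :: "'a ser" and ss
    using assms(1) by (subst prod.remove[of _ i]) (auto intro!: prod.cong)
  have "prodm (fs[i := (\<lambda>T. \<Sum>j\<in>J. c j * g j T)]) T
          = (\<Sum>ss\<in>factorizations ?n T. (\<Sum>j\<in>J. c j * g j (ss ! i)) * ?R ss)"
    by (simp add: prodm_eq_sum_factorizations upd)
  also have "\<dots> = (\<Sum>j\<in>J. c j * (\<Sum>ss\<in>factorizations ?n T. g j (ss ! i) * ?R ss))"
    by (simp add: sum_distrib_left sum_distrib_right mult.assoc sum.swap[of _ J])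
  also have "\<dots> = (\<Sum>j\<in>J. c j * prodm (fs[i := g j]) T)"
    by (simp add: prodm_eq_sum_factorizations upd)
  finally show ?thesis .
qed

lemma prodm_update_add:
  assumes "i < length fs"
  shows "prodm (fs[i := (\<lambda>T. g T + c * h T)]) T =
    prodm (fs[i := g]) T + c * (prodm (fs[i := h]) T :: 'a::comm_semiring_1)"
  using prodm_update_sum[OF assms, of "{True, False}" "\<lambda>j. if j then 1 else c"
    "\<lambda>j. if j then g else h"]
  by simp

lemma prodm_update_sum_list:
  assumes "i < length fs"
  shows "prodm (fs[i := (\<lambda>T. \<Sum>x\<leftarrow>xs. g x T)]) T =
    (\<Sum>x\<leftarrow>xs. prodm (fs[i := g x]) T :: 'a::comm_semiring_1)"
  using prodm_update_sum[OF assms, of "{..<length xs}" "\<lambda>_. 1" "\<lambda>j. g (xs ! j)"]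
  by (simp add: sum_list_sum_nth atLeast0LessThan)

lemma prodm_local:
  assumes "length gs = length fs"
    and "\<And>i s. i < length fs \<Longrightarrow> nleaves s \<le> nleaves T \<Longrightarrow> (fs ! i) s = (gs ! i) s"
  shows "prodm fs T = prodm gs T"
  unfolding prodm_eq_sum_factorizations assms(1)
  using assms(2) factorization_nleaves_le factorizationsD(1)
  by (intro sum.cong prod.cong) fastforce+

section \<open>Polynomials and substitution\<close>

abbreviation supp :: "'a::zero ser \<Rightarrow> ptree set" where
  "supp F \<equiv> {T. F T \<noteq> 0}"

definition is_poly :: "'a::zero ser \<Rightarrow> bool" where
  "is_poly F \<longleftrightarrow> finite (supp F) \<and> (\<forall>T\<in>supp F. valid T)"

definition is_xpoly :: "'a::zero ser \<Rightarrow> bool" where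
  "is_xpoly F \<longleftrightarrow> is_poly F \<and> (\<forall>T\<in>supp F. allx T)"

lemma is_polyD:
  "is_poly F \<Longrightarrow> finite (supp F)" "is_poly F \<Longrightarrow> F T \<noteq> 0 \<Longrightarrow> valid T"
  by (auto simp: is_poly_def)

lemma is_xpolyD:
  "is_xpoly F \<Longrightarrow> is_poly F" "is_xpoly F \<Longrightarrow> F T \<noteq> 0 \<Longrightarrow> allx T"
  by (auto simp: is_xpoly_def)

lemma finite_supp_delta [simp]: "finite (supp (delta S))"
  by (rule finite_subset[of _ "{S}"]) (auto simp: delta_def)

lemma is_poly_delta: "valid S \<Longrightarrow> is_poly (delta S)"
  and is_xpoly_delta: "valid S \<Longrightarrow> allx S \<Longrightarrow> is_xpoly (delta S)"
  by (auto simp: is_xpoly_def is_poly_def delta_def)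

lemma is_xpoly_x_ser: "is_xpoly x_ser"
  and is_xpoly_one_ser: "is_xpoly one_ser"
  and is_poly_y_ser: "is_poly y_ser"
  by (simp_all add: x_ser_eq_delta one_ser_eq_delta y_ser_eq_delta is_poly_delta is_xpoly_delta valid_def)

lemma supp_sum_subset:
  "supp (\<lambda>T. \<Sum>j\<in>J. c j * G j T :: 'a::semiring_0) \<subseteq> (\<Union>j\<in>J. supp (G j))"
proof
  fix T assume "T \<in> supp (\<lambda>T. \<Sum>j\<in>J. c j * G j T)"
  then obtain j where "j \<in> J" "c j * G j T \<noteq> 0"
    by (auto elim: sum.not_neutral_contains_not_neutral)
  then have "G j T \<noteq> 0" by (metis mult_zero_right)
  then show "T \<in> (\<Union>j\<in>J. supp (G j))" using \<open>j \<in> J\<close> by blast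
qed

lemma finite_supp_sum:
  assumes "finite J" and "\<And>j. j \<in> J \<Longrightarrow> finite (supp (G j))"
  shows "finite (supp (\<lambda>T. \<Sum>j\<in>J. c j * G j T :: 'a::semiring_0))"
  using assms by (blast intro: finite_subset[OF supp_sum_subset])

lemma is_poly_sum:
  "finite J \<Longrightarrow> (\<And>j. j \<in> J \<Longrightarrow> is_poly (G j)) \<Longrightarrow>
    is_poly (\<lambda>T. \<Sum>j\<in>J. c j * G j T :: 'a::semiring_0)"
  using supp_sum_subset[of c G J] by (auto simp: is_poly_def intro: finite_supp_sum)

lemma is_xpoly_sum:
  "finite J \<Longrightarrow> (\<And>j. j \<in> J \<Longrightarrow> is_xpoly (G j)) \<Longrightarrow>
    is_xpoly (\<lambda>T. \<Sum>j\<in>J. c j * G j T :: 'a::semiring_0)"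
  using supp_sum_subset[of c G J] by (auto simp: is_xpoly_def intro: is_poly_sum)

lemma is_xpoly_supp_subset: "is_xpoly F \<Longrightarrow> supp G \<subseteq> supp F \<Longrightarrow> is_xpoly G"
  by (auto simp: is_xpoly_def is_poly_def intro: finite_subset)

lemma is_xpoly_add:
  "is_xpoly F \<Longrightarrow> is_xpoly G \<Longrightarrow> is_xpoly (\<lambda>T. F T + G T :: 'a::semiring_1)"
  using is_xpoly_sum[of "{True, False}" "\<lambda>j. if j then F else G" "\<lambda>_. 1"] by simp

lemma is_xpoly_diff:
  "is_xpoly F \<Longrightarrow> is_xpoly G \<Longrightarrow> is_xpoly (\<lambda>T. F T - G T :: 'a::ring_1)"
  using is_xpoly_sum[of "{True, False}" "\<lambda>j. if j then F else G" "\<lambda>j. if j then 1 else -1"] by simp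

lemma prodm_eq_sum_lists:
  assumes "finite A" and "\<forall>s\<in>A. valid s" and "\<forall>f\<in>set fs. supp f \<subseteq> A"
  shows "prodm fs T = (\<Sum>ss\<in>{ss. set ss \<subseteq> A \<and> length ss = length fs}.
           prod_apply fs ss * delta (bullet ss) T :: 'a::comm_semiring_1)"
proof -
  let ?L = "{ss. set ss \<subseteq> A \<and> length ss = length fs}"
  have "(\<Sum>ss\<in>?L. prod_apply fs ss * delta (bullet ss) T) =
      (\<Sum>ss\<in>?L. if bullet ss = T then prod_apply fs ss else 0)"
    by (rule sum.cong) (auto simp: delta_def)
  also have "\<dots> = (\<Sum>ss\<in>{ss\<in>?L. bullet ss = T}. prod_apply fs ss)"
    by (rule sum.inter_filter[symmetric]) (simp add: finite_lists_length_eq assms(1))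
  also have "\<dots> = (\<Sum>ss\<in>factorizations (length fs) T. prod_apply fs ss)"
  proof (rule sum.mono_neutral_left[OF finite_factorizations])
    show "{ss\<in>?L. bullet ss = T} \<subseteq> factorizations (length fs) T"
      using assms(2) by (auto simp: factorizations_def)
    show "\<forall>ss\<in>factorizations (length fs) T - {ss\<in>?L. bullet ss = T}. prod_apply fs ss = 0"
    proof
      fix ss assume ss: "ss \<in> factorizations (length fs) T - {ss\<in>?L. bullet ss = T}"
      then obtain s where "s \<in> set ss" "s \<notin> A"
        by (auto simp: factorizations_def)
      then obtain i where i: "i < length ss" "ss ! i \<notin> A"
        by (metis in_set_conv_nth)
      then have "(fs ! i) (ss ! i) = 0"
        using ss assms(3) nth_mem[of i fs] by (force simp: factorizations_def)
      then show "prod_apply fs ss = 0"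
        using ss i by (intro prod_apply_eq_0) (auto simp: factorizations_def)
    qed
  qed
  finally show ?thesis by (simp add: prodm_eq_sum_prod_apply)
qed

lemma is_poly_prodm:
  assumes "\<forall>f\<in>set fs. is_poly f"
  shows "is_poly (prodm fs :: 'a::comm_semiring_1 ser)"
proof -
  let ?A = "\<Union>f\<in>set fs. supp f"
  let ?L = "{ss. set ss \<subseteq> ?A \<and> length ss = length fs}"
  have A: "finite ?A" "\<forall>s\<in>?A. valid s" using assms by (auto simp: is_poly_def)
  have "supp (prodm fs) \<subseteq> bullet ` ?L"
  proof
    fix T assume "T \<in> supp (prodm fs)"
    moreover have "prodm fs T = (\<Sum>ss\<in>?L. prod_apply fs ss * delta (bullet ss) T)"
      by (rule prodm_eq_sum_lists[OF A]) blast
    ultimately have "(\<Sum>ss\<in>?L. prod_apply fs ss * delta (bullet ss) T) \<noteq> (0::'a)"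
      by simp
    then obtain ss where "ss \<in> ?L" "prod_apply fs ss * delta (bullet ss) T \<noteq> (0::'a)"
      by (rule sum.not_neutral_contains_not_neutral)
    then show "T \<in> bullet ` ?L" by (auto simp: delta_def split: if_splits)
  qed
  moreover have "finite (bullet ` ?L)" using A by (simp add: finite_lists_length_eq)
  ultimately show ?thesis
    using prodm_nonzero_valid by (auto simp: is_poly_def intro: finite_subset)
qed

lemma is_xpoly_prodm:
  assumes "\<forall>f\<in>set fs. is_xpoly f"
  shows "is_xpoly (prodm fs :: 'a::comm_semiring_1 ser)"
proof -
  have "allx T" if nonzero: "prodm fs T \<noteq> 0" for T
  proof -
    obtain ss where ss: "ss \<in> factorizations (length fs) T"
      "\<And>i. i < length fs \<Longrightarrow> (fs ! i) (ss ! i) \<noteq> 0"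
      using prodm_nonzero_factorization[OF nonzero] by blast
    have "allx s" if "s \<in> set ss" for s
    proof -
      obtain i where i: "i < length ss" "s = ss ! i"
        using \<open>s \<in> set ss\<close> by (metis in_set_conv_nth)
      then have "i < length fs" using factorizationsD(1)[OF ss(1)] by simp
      then show "allx s" using assms ss(2)[of i] i(2) by (auto dest: is_xpolyD(2))
    qed
    then show "allx T" using allx_bullet factorizationsD(3)[OF ss(1)] by blast
  qed
  moreover have "is_poly (prodm fs)"
    using assms by (intro is_poly_prodm) (simp add: is_xpoly_def)
  ultimately show ?thesis by (simp add: is_xpoly_def)
qed

lemma prodm_single_poly: "is_poly g \<Longrightarrow> prodm [g] = g"
  by (auto simp: prodm_single is_poly_def fun_eq_iff)

lemma prodm_replicate_one_ser_update:
  assumes "i < p" and "is_poly W"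
  shows "prodm ((replicate p one_ser)[i := W]) = (W :: 'a::comm_semiring_1 ser)"
proof -
  have "(replicate p one_ser)[i := W] = replicate i one_ser @ [W] @ replicate (p - Suc i) one_ser"
    using assms(1) by (simp add: upd_conv_take_nth_drop)
  then have "prodm ((replicate p one_ser)[i := W]) = prodm [W]"
    by (simp only: prodm_replicate_one_ser)
  then show ?thesis by (simp add: prodm_single_poly[OF assms(2)])
qed

lemma subst_eq_sum:
  assumes "finite (supp F)" "finite A" "supp F \<subseteq> A"
  shows "subst a b F T = (\<Sum>S\<in>A. F S * phi_tree a b S T :: 'a::comm_semiring_1)"
  unfolding subst_def using assms by (intro sum.mono_neutral_left) auto

lemma subst_delta: "subst a b (delta S) = (phi_tree a b S :: 'a::comm_semiring_1 ser)"
proof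
  fix T
  have "subst a b (delta S) T = (\<Sum>S'\<in>{S}. delta S S' * phi_tree a b S' T)"
    by (rule subst_eq_sum) (auto simp: delta_def)
  then show "subst a b (delta S) T = phi_tree a b S T" by simp
qed

lemma subst_linear:
  assumes "finite J" and "\<And>j. j \<in> J \<Longrightarrow> finite (supp (G j))"
  shows "subst a b (\<lambda>T. \<Sum>j\<in>J. c j * G j T) =
    (\<lambda>T. \<Sum>j\<in>J. c j * subst a b (G j) T :: 'a::comm_semiring_1)"
proof
  fix T
  let ?A = "\<Union>j\<in>J. supp (G j)"
  have A: "finite ?A" using assms by auto
  have "subst a b (\<lambda>T. \<Sum>j\<in>J. c j * G j T) T =
      (\<Sum>S\<in>?A. (\<Sum>j\<in>J. c j * G j S) * phi_tree a b S T)"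
    by (rule subst_eq_sum[OF finite_supp_sum[OF assms] A supp_sum_subset])
  also have "\<dots> = (\<Sum>j\<in>J. c j * (\<Sum>S\<in>?A. G j S * phi_tree a b S T))"
    by (simp add: sum_distrib_left sum_distrib_right mult.assoc sum.swap[of _ ?A])
  also have "\<dots> = (\<Sum>j\<in>J. c j * subst a b (G j) T)"
    using assms A by (intro sum.cong refl arg_cong2[where f = "(*)"] subst_eq_sum[symmetric]) auto
  finally show "subst a b (\<lambda>T. \<Sum>j\<in>J. c j * G j T) T =
      (\<Sum>j\<in>J. c j * subst a b (G j) T)" .
qed

lemma subst_add:
  assumes "finite (supp F)" "finite (supp G)"
  shows "subst a b (\<lambda>T. F T + G T) = (\<lambda>T. subst a b F T + subst a b G T :: 'a::comm_semiring_1)"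
  using assms subst_linear[of "{True, False}" "\<lambda>j. if j then F else G" a b "\<lambda>_. 1"] by simp

lemma subst_zero: "subst a b (\<lambda>_. 0) = (\<lambda>_. 0 :: 'a::comm_semiring_1)"
  by (simp add: subst_def fun_eq_iff)

lemma phi_tree_oneP: "phi_tree a b oneP = one_ser"
  by (simp add: oneP_def prodm_Nil)

lemma subst_one_ser: "subst a b one_ser = (one_ser :: 'a::comm_semiring_1 ser)"
  by (simp add: one_ser_eq_delta subst_delta phi_tree_oneP[folded one_ser_eq_delta])

lemma is_poly_phi_tree:
  assumes "is_poly a" "is_poly b"
  shows "is_poly (phi_tree a b S :: 'a::comm_semiring_1 ser)"
proof (induction S)
  case (Node ts)
  then show ?case by (simp add: is_poly_prodm)
qed (use assms in simp)

lemma is_xpoly_phi_tree: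
  assumes "is_xpoly a" "is_poly b" "allx S"
  shows "is_xpoly (phi_tree a b S :: 'a::comm_semiring_1 ser)"
  using assms(3)
proof (induction S)
  case (Node ts)
  then show ?case by (simp add: is_xpoly_prodm)
qed (use assms in simp)

lemma phi_tree_x_ser:
  assumes "allx S" "valid S"
  shows "phi_tree x_ser b S = (delta S :: 'a::comm_semiring_1 ser)"
  using assms
proof (induction S)
  case (Leaf x)
  then show ?case by (simp add: x_ser_eq_delta)
next
  case (Node ts)
  show ?case
  proof (cases "ts = []")
    case True
    then show ?thesis by (simp add: prodm_Nil one_ser_eq_delta oneP_def)
  next
    case False
    note ts = valid_NodeD[OF Node.prems(2) False]
    then have "map (phi_tree x_ser b) ts = map delta ts" using Node by auto
    then have "phi_tree x_ser b (Node ts) = prodm (map delta ts)" by (simp only: phi_tree.simps)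
    also have "\<dots> = delta (bullet ts)" using ts by (intro prodm_map_delta) auto
    also have "bullet ts = Node ts" using ts by (intro bullet_eq_Node) auto
    finally show ?thesis .
  qed
qed

lemma phi_tree_bullet:
  assumes "is_poly a" "is_poly b"
  shows "phi_tree a b (bullet ss) = prodm (map (phi_tree a b) ss :: 'a::comm_semiring_1 ser list)"
proof -
  have strip: "prodm (map (phi_tree a b) ss) = prodm (map (phi_tree a b) (strip_oneP ss) :: 'a ser list)"
    using prodm_strip_oneP[of "phi_tree a b" "[]" ss, OF phi_tree_oneP] by simp
  show ?thesis
    unfolding strip
  proof (cases ss rule: bullet_cases)
    case 1
    then show "phi_tree a b (bullet ss) = prodm (map (phi_tree a b) (strip_oneP ss))"
      by (simp only: phi_tree_oneP prodm_Nil list.map(1))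
  next
    case (2 t)
    then show "phi_tree a b (bullet ss) = prodm (map (phi_tree a b) (strip_oneP ss))"
      using prodm_single_poly[OF is_poly_phi_tree[OF assms]] by (simp only: list.map)
  next
    case 3
    then show "phi_tree a b (bullet ss) = prodm (map (phi_tree a b) (strip_oneP ss))"
      by (simp only: phi_tree.simps(2))
  qed
qed

lemma subst_prodm:
  assumes "is_poly a" "is_poly b" and "\<forall>f\<in>set fs. is_poly f"
  shows "subst a b (prodm fs) = prodm (map (subst a b) fs :: 'a::comm_semiring_1 ser list)"
proof
  fix T
  let ?A = "\<Union>f\<in>set fs. supp f"
  let ?L = "{ss. set ss \<subseteq> ?A \<and> length ss = length fs}"
  have A: "finite ?A" "\<forall>s\<in>?A. valid s" using assms(3) by (auto simp: is_poly_def)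
  have L: "finite ?L" using A by (simp add: finite_lists_length_eq)
  have "prodm fs = (\<lambda>S. \<Sum>ss\<in>?L. prod_apply fs ss * delta (bullet ss) S)"
    by (rule ext, rule prodm_eq_sum_lists[OF A]) blast
  then have "subst a b (prodm fs) T = (\<Sum>ss\<in>?L. prod_apply fs ss * phi_tree a b (bullet ss) T)"
    by (simp add: subst_linear[OF L] subst_delta)
  also have "\<dots> = (\<Sum>ss\<in>?L. prod_apply fs ss * prodm (map (\<lambda>i. phi_tree a b (ss ! i)) [0..<length fs]) T)"
    by (intro sum.cong refl) (simp add: phi_tree_bullet[OF assms(1,2)] map_nth_upt)
  also have "\<dots> = prodm (map (subst a b) fs) T"
  proof (rule prodm_multilinear[OF A(1), symmetric])
    fix i assume i: "i < length fs"
    have "supp (fs ! i) \<subseteq> ?A" using nth_mem[OF i] by blast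
    then show "map (subst a b) fs ! i = (\<lambda>T. \<Sum>s\<in>?A. (fs ! i) s * phi_tree a b s T)"
      using i A(1) by (auto intro!: subst_eq_sum intro: finite_subset)
  qed simp
  finally show "subst a b (prodm fs) T = prodm (map (subst a b) fs) T" .
qed

lemma is_xpoly_subst:
  assumes "is_xpoly F" "is_xpoly a" "is_poly b"
  shows "is_xpoly (subst a b F :: 'a::comm_semiring_1 ser)"
proof -
  have fin: "finite (supp F)" using assms(1) by (simp add: is_xpoly_def is_poly_def)
  have "subst a b F = (\<lambda>T. \<Sum>S\<in>supp F. F S * phi_tree a b S T)"
    using fin by (intro ext subst_eq_sum) auto
  moreover have "is_xpoly (\<lambda>T. \<Sum>S\<in>supp F. F S * phi_tree a b S T)"
    using fin assms by (intro is_xpoly_sum is_xpoly_phi_tree) (auto dest: is_xpolyD(2))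
  ultimately show ?thesis by simp
qed

section \<open>The derivative\<close>

definition dx_tree :: "ptree \<Rightarrow> 'a::comm_semiring_1 ser" where
  "dx_tree S = dx (delta S)"

lemma of_nat_count_list_eq_sum_delta:
  "of_nat (count_list xs T) = (\<Sum>x\<leftarrow>xs. delta x T :: 'a::comm_semiring_1)"
  by (induction xs) (auto simp: delta_def)

lemma dser_eq_sum:
  assumes "finite A" "supp F \<subseteq> A"
  shows "dser F T = (\<Sum>S\<in>A. F S * of_nat (count_list (relabels S) T) :: 'a::comm_semiring_1)"
  unfolding dser_def
proof (rule sum.mono_neutral_left[OF assms(1)])
  show "{S. F S \<noteq> 0 \<and> T \<in> set (relabels S)} \<subseteq> A" using assms(2) by auto
  show "\<forall>S\<in>A - {S. F S \<noteq> 0 \<and> T \<in> set (relabels S)}.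
      F S * of_nat (count_list (relabels S) T) = 0"
  proof
    fix S assume "S \<in> A - {S. F S \<noteq> 0 \<and> T \<in> set (relabels S)}"
    then have "F S = 0 \<or> T \<notin> set (relabels S)" by auto
    then show "F S * of_nat (count_list (relabels S) T) = 0" by auto
  qed
qed

lemma dser_delta: "dser (delta S) = (\<lambda>T. \<Sum>t\<leftarrow>relabels S. delta t T :: 'a::comm_semiring_1)"
proof
  fix T
  have "dser (delta S) T = (\<Sum>S'\<in>{S}. delta S S' * of_nat (count_list (relabels S') T) :: 'a)"
    by (rule dser_eq_sum) (auto simp: delta_def)
  then show "dser (delta S) T = (\<Sum>t\<leftarrow>relabels S. delta t T :: 'a)"
    by (simp add: of_nat_count_list_eq_sum_delta)
qed

lemma finite_supp_dser_delta: "finite (supp (dser (delta S) :: 'a::comm_semiring_1 ser))"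
proof (rule finite_subset)
  show "supp (dser (delta S) :: 'a ser) \<subseteq> set (relabels S)"
    unfolding dser_delta of_nat_count_list_eq_sum_delta[symmetric] by (auto intro: ccontr)
qed simp

lemma dx_tree_eq_sum_relabels:
  "dx_tree S = (\<lambda>T. \<Sum>t\<leftarrow>relabels S. phi_tree x_ser one_ser t T :: 'a::comm_semiring_1)"
proof -
  let ?ts = "relabels S"
  have "dser (delta S) = (\<lambda>T. \<Sum>j<length ?ts. 1 * delta (?ts ! j) T :: 'a)"
    unfolding dser_delta by (simp add: sum_list_sum_nth atLeast0LessThan)
  then have "dx_tree S = subst x_ser one_ser (\<lambda>T. \<Sum>j<length ?ts. 1 * delta (?ts ! j) T :: 'a)"
    by (simp add: dx_tree_def dx_def)
  also have "\<dots> = (\<lambda>T. \<Sum>j<length ?ts. 1 * subst x_ser one_ser (delta (?ts ! j)) T)"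
    by (rule subst_linear) simp_all
  finally show ?thesis by (simp add: subst_delta sum_list_sum_nth atLeast0LessThan)
qed

lemma is_poly_dx_tree: "is_poly (dx_tree S :: 'a::comm_semiring_1 ser)"
proof -
  have eq: "dx_tree S =
      (\<lambda>T. \<Sum>j<length (relabels S). 1 * phi_tree x_ser one_ser (relabels S ! j) T :: 'a)"
    by (simp add: dx_tree_eq_sum_relabels sum_list_sum_nth atLeast0LessThan)
  have "is_poly (\<lambda>T. \<Sum>j<length (relabels S). 1 * phi_tree x_ser one_ser (relabels S ! j) T :: 'a)"
    using is_xpoly_x_ser is_xpoly_one_ser
    by (intro is_poly_sum is_poly_phi_tree) (auto dest: is_xpolyD(1))
  then show ?thesis by (subst eq)
qed

lemma dx_eq_sum:
  assumes "finite A" "supp F \<subseteq> A"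
  shows "dx F = (\<lambda>T. \<Sum>S\<in>A. F S * dx_tree S T :: 'a::comm_semiring_1)"
proof -
  have "dser F = (\<lambda>T. \<Sum>S\<in>A. F S * dser (delta S) T)"
    by (rule ext) (simp add: dser_eq_sum[OF assms] dser_delta of_nat_count_list_eq_sum_delta)
  then have "dx F = subst x_ser one_ser (\<lambda>T. \<Sum>S\<in>A. F S * dser (delta S) T)"
    by (simp add: dx_def)
  also have "\<dots> = (\<lambda>T. \<Sum>S\<in>A. F S * dx_tree S T)"
    by (simp add: subst_linear[OF assms(1)] finite_supp_dser_delta dx_tree_def dx_def)
  finally show ?thesis .
qed

lemma dx_eq_sum_supp:
  "finite (supp F) \<Longrightarrow> dx F = (\<lambda>T. \<Sum>S\<in>supp F. F S * dx_tree S T :: 'a::comm_semiring_1)"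
  by (rule dx_eq_sum) auto

lemma dx_linear:
  assumes "finite J" and "\<And>j. j \<in> J \<Longrightarrow> finite (supp (G j))"
  shows "dx (\<lambda>T. \<Sum>j\<in>J. c j * G j T) =
    (\<lambda>T. \<Sum>j\<in>J. c j * dx (G j) T :: 'a::comm_semiring_1)"
proof
  fix T
  let ?A = "\<Union>j\<in>J. supp (G j)"
  have A: "finite ?A" using assms by auto
  have "dx (\<lambda>T. \<Sum>j\<in>J. c j * G j T) T =
      (\<Sum>S\<in>?A. (\<Sum>j\<in>J. c j * G j S) * dx_tree S T)"
    by (simp add: dx_eq_sum[OF A supp_sum_subset])
  also have "\<dots> = (\<Sum>j\<in>J. c j * (\<Sum>S\<in>?A. G j S * dx_tree S T))"
    by (simp add: sum_distrib_left sum_distrib_right mult.assoc sum.swap[of _ ?A])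
  also have "\<dots> = (\<Sum>j\<in>J. c j * dx (G j) T)"
  proof (rule sum.cong[OF refl])
    fix j assume "j \<in> J"
    then have "dx (G j) = (\<lambda>T. \<Sum>S\<in>?A. G j S * dx_tree S T)"
      using A by (intro dx_eq_sum) auto
    then show "c j * (\<Sum>S\<in>?A. G j S * dx_tree S T) = c j * dx (G j) T" by simp
  qed
  finally show "dx (\<lambda>T. \<Sum>j\<in>J. c j * G j T) T = (\<Sum>j\<in>J. c j * dx (G j) T)" .
qed

lemma dx_scale: "finite (supp F) \<Longrightarrow> dx (\<lambda>T. c * F T) = (\<lambda>T. c * dx F T :: 'a::comm_semiring_1)"
  using dx_linear[of "{()}" "\<lambda>_. F" "\<lambda>_. c"] by simp

lemma subst_diff:
  assumes "finite (supp F)" "finite (supp G)"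
  shows "subst a b (\<lambda>T. F T - G T) = (\<lambda>T. subst a b F T - subst a b G T :: 'a::comm_ring_1)"
  using assms subst_linear[of "{True, False}" "\<lambda>j. if j then F else G" a b "\<lambda>j. if j then 1 else -1"]
  by simp

lemma dx_diff:
  assumes "finite (supp F)" "finite (supp G)"
  shows "dx (\<lambda>T. F T - G T) = (\<lambda>T. dx F T - dx G T :: 'a::comm_ring_1)"
  using assms dx_linear[of "{True, False}" "\<lambda>j. if j then F else G" "\<lambda>j. if j then 1 else -1"] by simp

lemma dx_zero: "dx (\<lambda>_. 0) = (\<lambda>_. 0 :: 'a::comm_semiring_1)"
  using dx_eq_sum[of "{}" "\<lambda>_. 0"] by simp

lemma dx_tree_oneP: "dx_tree oneP = (\<lambda>_. 0)"
  by (simp add: dx_tree_eq_sum_relabels oneP_def)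

lemma dx_tree_Leaf_X: "dx_tree (Leaf X) = one_ser"
  by (simp add: dx_tree_eq_sum_relabels fun_eq_iff)

lemma dx_x_ser: "dx x_ser = one_ser"
  by (simp add: x_ser_eq_delta dx_tree_def[symmetric] dx_tree_Leaf_X)

lemma dx_one_ser: "dx one_ser = (\<lambda>_. 0)"
  by (simp add: one_ser_eq_delta dx_tree_def[symmetric] dx_tree_oneP)

lemma sum_list_concat: "sum_list (concat xss) = sum_list (map sum_list xss :: 'a::monoid_add list)"
  by (induction xss) auto

lemma relabelsl_eq_concat:
  "relabelsl ts = concat (map (\<lambda>i. map (\<lambda>t'. ts[i := t']) (relabels (ts ! i))) [0..<length ts])"
proof (induction ts)
  case (Cons t ts)
  have "[0..<length (t # ts)] = 0 # map Suc [0..<length ts]"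
    by (simp add: map_Suc_upt upt_conv_Cons del: upt_Suc)
  then show ?case using Cons by (simp add: comp_def map_concat)
qed simp

lemma dx_tree_Node:
  assumes "allx (Node ts)" and "\<forall>t\<in>set ts. valid t"
  shows "dx_tree (Node ts) =
    (\<lambda>T. \<Sum>i<length ts. prodm ((map delta ts)[i := dx_tree (ts ! i)]) T :: 'a::comm_semiring_1)"
proof
  fix T
  let ?phi = "phi_tree x_ser one_ser :: ptree \<Rightarrow> 'a ser"
  have md: "map ?phi ts = map delta ts" using assms by (auto intro: phi_tree_x_ser)
  have "dx_tree (Node ts) T = (\<Sum>t\<leftarrow>map Node (relabelsl ts). ?phi t T)"
    by (simp add: dx_tree_eq_sum_relabels)
  also have "\<dots> = (\<Sum>i<length ts. \<Sum>t'\<leftarrow>relabels (ts ! i). ?phi (Node (ts[i := t'])) T)"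
    unfolding relabelsl_eq_concat
    by (simp add: map_concat sum_list_concat comp_def interv_sum_list_conv_sum_set_nat atLeast0LessThan)
  also have "\<dots> = (\<Sum>i<length ts. \<Sum>t'\<leftarrow>relabels (ts ! i).
      prodm ((map delta ts)[i := ?phi t']) T)"
    by (simp add: map_update md)
  also have "\<dots> = (\<Sum>i<length ts. prodm ((map delta ts)[i := dx_tree (ts ! i)]) T)"
    by (simp add: dx_tree_eq_sum_relabels prodm_update_sum_list)
  finally show "dx_tree (Node ts) T =
      (\<Sum>i<length ts. prodm ((map delta ts)[i := dx_tree (ts ! i)]) T :: 'a)" .
qed

lemma sum_prodm_dx_tree_strip_oneP:
  "(\<Sum>i<length ss. prodm (A @ (map delta ss)[i := dx_tree (ss ! i)]) T) =
   (\<Sum>i<length (strip_oneP ss). prodm (A @ (map delta (strip_oneP ss))[i := dx_tree (strip_oneP ss ! i)]) T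
     :: 'a::comm_semiring_1)"
proof (induction ss arbitrary: A)
  case (Cons s ss)
  have shift: "(\<Sum>i<length (s # ss). prodm (A @ (map delta (s # ss))[i := dx_tree ((s # ss) ! i)]) T) =
      prodm (A @ dx_tree s # map delta ss) T +
      (\<Sum>i<length ss. prodm ((A @ [delta s]) @ (map delta ss)[i := dx_tree (ss ! i)]) T :: 'a)"
    for ss
    by (simp only: length_Cons sum.lessThan_Suc_shift) simp
  show ?case
  proof (cases "s = oneP")
    case True
    then show ?thesis
      using shift Cons[of A] prodm_insert_zero[of A "map delta ss"] prodm_insert_one_ser[of A]
      by (simp add: dx_tree_oneP one_ser_eq_delta)
  next
    case False
    have "prodm (A @ dx_tree s # map delta ss) T = (prodm (A @ dx_tree s # map delta (strip_oneP ss)) T :: 'a)"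
      using prodm_strip_oneP[of delta "A @ [dx_tree s]" ss] by (simp add: one_ser_eq_delta)
    then show ?thesis using False shift Cons[of "A @ [delta s]"] by simp
  qed
qed simp

lemma dx_tree_bullet:
  assumes "\<forall>s\<in>set ss. valid s \<and> allx s"
  shows "dx_tree (bullet ss) =
    (\<lambda>T. \<Sum>i<length ss. prodm ((map delta ss)[i := dx_tree (ss ! i)]) T :: 'a::comm_semiring_1)"
proof
  fix T
  have strip: "(\<Sum>i<length ss. prodm ((map delta ss)[i := dx_tree (ss ! i)]) T) =
     (\<Sum>i<length (strip_oneP ss).
        prodm ((map delta (strip_oneP ss))[i := dx_tree (strip_oneP ss ! i)]) T :: 'a)"
    using sum_prodm_dx_tree_strip_oneP[of "[]" ss T] by simp
  show "dx_tree (bullet ss) T = (\<Sum>i<length ss. prodm ((map delta ss)[i := dx_tree (ss ! i)]) T :: 'a)"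
    unfolding strip
  proof (cases ss rule: bullet_cases)
    case 1
    then show "dx_tree (bullet ss) T = (\<Sum>i<length (strip_oneP ss).
        prodm ((map delta (strip_oneP ss))[i := dx_tree (strip_oneP ss ! i)]) T :: 'a)"
      by (simp add: dx_tree_oneP)
  next
    case (2 t)
    then show "dx_tree (bullet ss) T = (\<Sum>i<length (strip_oneP ss).
        prodm ((map delta (strip_oneP ss))[i := dx_tree (strip_oneP ss ! i)]) T :: 'a)"
      by (simp add: prodm_single_poly[OF is_poly_dx_tree])
  next
    case 3
    have "allx (Node (strip_oneP ss))" "\<forall>t\<in>set (strip_oneP ss). valid t" using assms by auto
    then show "dx_tree (bullet ss) T = (\<Sum>i<length (strip_oneP ss).
        prodm ((map delta (strip_oneP ss))[i := dx_tree (strip_oneP ss ! i)]) T :: 'a)"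
      using 3 by (simp add: dx_tree_Node)
  qed
qed

lemma series_eq_sum_delta:
  assumes "finite A" "supp f \<subseteq> A"
  shows "f T = (\<Sum>s\<in>A. f s * delta s T :: 'a::comm_semiring_1)"
proof -
  have "(\<Sum>s\<in>A. f s * delta s T) = (\<Sum>s\<in>A. if T = s then f s else 0)"
    by (rule sum.cong) (auto simp: delta_def)
  also have "\<dots> = f T" using assms by auto
  finally show ?thesis by simp
qed

lemma prodm_update_dx_eq_sum_lists:
  assumes "finite A" and "\<forall>f\<in>set fs. supp f \<subseteq> A" and "i < length fs"
  shows "prodm (fs[i := dx (fs ! i)]) T = (\<Sum>ss\<in>{ss. set ss \<subseteq> A \<and> length ss = length fs}.
           prod_apply fs ss * prodm ((map delta ss)[i := dx_tree (ss ! i)]) T :: 'a::comm_semiring_1)"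
proof -
  define G where "G = (\<lambda>k s. if k = i then dx_tree s else (delta s :: 'a ser))"
  have "prodm (fs[i := dx (fs ! i)]) T = (\<Sum>ss\<in>{ss. set ss \<subseteq> A \<and> length ss = length fs}.
          prod_apply fs ss * prodm (map (\<lambda>k. G k (ss ! k)) [0..<length fs]) T)"
  proof (rule prodm_multilinear[OF assms(1)])
    fix k assume k: "k < length fs"
    have supp: "supp (fs ! k) \<subseteq> A" using assms(2) k by simp
    show "fs[i := dx (fs ! i)] ! k = (\<lambda>T. \<Sum>s\<in>A. (fs ! k) s * G k s T)"
    proof (cases "k = i")
      case True
      then show ?thesis using k dx_eq_sum[OF assms(1) supp] by (simp add: G_def)
    next
      case False
      have "fs ! k = (\<lambda>T. \<Sum>s\<in>A. (fs ! k) s * delta s T)"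
        using series_eq_sum_delta[OF assms(1) supp] by (rule ext)
      then show ?thesis using k False by (simp add: G_def)
    qed
  qed simp
  also have "\<dots> = (\<Sum>ss\<in>{ss. set ss \<subseteq> A \<and> length ss = length fs}.
                    prod_apply fs ss * prodm ((map delta ss)[i := dx_tree (ss ! i)]) T)"
    using assms(3)
    by (intro sum.cong refl arg_cong2[where f = "(*)"] arg_cong2[where f = prodm] nth_equalityI)
       (auto simp: G_def nth_list_update)
  finally show ?thesis .
qed

lemma dx_prodm:
  assumes "\<forall>f\<in>set fs. is_xpoly f"
  shows "dx (prodm fs) = (\<lambda>T. \<Sum>i<length fs. prodm (fs[i := dx (fs ! i)]) T :: 'a::comm_semiring_1)"
proof
  fix T
  let ?A = "\<Union>f\<in>set fs. supp f"
  let ?L = "{ss. set ss \<subseteq> ?A \<and> length ss = length fs}"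
  have A: "finite ?A" "\<forall>s\<in>?A. valid s \<and> allx s"
    using assms by (auto simp: is_xpoly_def is_poly_def)
  have L: "finite ?L" using A by (simp add: finite_lists_length_eq)
  have "prodm fs = (\<lambda>S. \<Sum>ss\<in>?L. prod_apply fs ss * delta (bullet ss) S)"
    using A by (intro ext prodm_eq_sum_lists) auto
  then have "dx (prodm fs) T = (\<Sum>ss\<in>?L. prod_apply fs ss * dx_tree (bullet ss) T)"
    by (simp add: dx_linear[OF L] dx_tree_def)
  also have "\<dots> = (\<Sum>ss\<in>?L. prod_apply fs ss *
      (\<Sum>i<length fs. prodm ((map delta ss)[i := dx_tree (ss ! i)]) T))"
  proof (rule sum.cong[OF refl])
    fix ss assume ss: "ss \<in> ?L"
    then have "\<forall>s\<in>set ss. valid s \<and> allx s" using A(2) by blast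
    then show "prod_apply fs ss * dx_tree (bullet ss) T =
        prod_apply fs ss * (\<Sum>i<length fs. prodm ((map delta ss)[i := dx_tree (ss ! i)]) T)"
      using ss by (simp add: dx_tree_bullet)
  qed
  also have "\<dots> = (\<Sum>i<length fs. \<Sum>ss\<in>?L.
      prod_apply fs ss * prodm ((map delta ss)[i := dx_tree (ss ! i)]) T)"
    by (simp add: sum_distrib_left sum.swap[of _ ?L])
  also have "\<dots> = (\<Sum>i<length fs. prodm (fs[i := dx (fs ! i)]) T)"
    using A(1) by (intro sum.cong refl prodm_update_dx_eq_sum_lists[symmetric]) auto
  finally show "dx (prodm fs) T = (\<Sum>i<length fs. prodm (fs[i := dx (fs ! i)]) T)" .
qed

lemma prodm_update_delta_nonzero:
  assumes "prodm ((map delta ts)[i := g]) T \<noteq> (0::'a::comm_semiring_1)" and "i < length ts"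
  obtains s where "g s \<noteq> 0" and "T = bullet (ts[i := s])"
proof -
  obtain ss where ss: "ss \<in> factorizations (length ts) T"
    and nz: "\<And>k. k < length ts \<Longrightarrow> (((map delta ts)[i := g]) ! k) (ss ! k) \<noteq> 0"
    using prodm_nonzero_factorization[OF assms(1)] by auto
  have "ss = ts[i := ss ! i]"
  proof (rule nth_equalityI)
    fix k assume "k < length ss"
    then show "ss ! k = ts[i := ss ! i] ! k"
      using nz[of k] factorizationsD(1)[OF ss] by (cases "k = i") (auto simp: delta_def split: if_splits)
  qed (simp add: factorizationsD(1)[OF ss])
  then show ?thesis
    using that[of "ss ! i"] nz[of i] assms(2) factorizationsD(3)[OF ss] by auto
qed

lemma dx_tree_nonzero:
  assumes "allx S" "valid S" and "dx_tree S T \<noteq> (0::'a::comm_semiring_1)"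
  shows "allx T \<and> Suc (nleaves T) = nleaves S"
  using assms
proof (induction S arbitrary: T)
  case (Leaf a)
  then show ?case by (auto simp: dx_tree_Leaf_X one_ser_def split: if_splits)
next
  case (Node ts)
  have "ts \<noteq> []" using Node.prems(3) by (auto simp: dx_tree_oneP oneP_def[symmetric])
  with Node.prems(2) have ts: "\<forall>t\<in>set ts. valid t" by (auto dest: valid_NodeD)
  have "(\<Sum>i<length ts. prodm ((map delta ts)[i := dx_tree (ts ! i)]) T :: 'a) \<noteq> 0"
    using Node.prems(3) by (simp add: dx_tree_Node[OF Node.prems(1) ts])
  then obtain i where i: "i < length ts"
    and nz: "prodm ((map delta ts)[i := dx_tree (ts ! i)]) T \<noteq> (0::'a)"
    by (auto elim: sum.not_neutral_contains_not_neutral)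
  obtain s where s: "dx_tree (ts ! i) s \<noteq> (0::'a)" and T: "T = bullet (ts[i := s])"
    by (rule prodm_update_delta_nonzero[OF nz i])
  have IH: "allx s \<and> Suc (nleaves s) = nleaves (ts ! i)"
    using Node.IH[OF nth_mem[OF i] _ _ s] Node.prems(1) ts i by auto
  have "allx T"
    using IH Node.prems(1) T set_update_subset_insert[of ts i s] by (auto intro!: allx_bullet)
  moreover
  have "nleaves (ts ! i) \<le> sum_list (map nleaves ts)"
    using i by (simp add: elem_le_sum_list[of i "map nleaves ts", simplified])
  moreover have "nleaves T = sum_list (map nleaves ts) + nleaves s - nleaves (ts ! i)"
    using i T by (simp add: nleaves_bullet map_update sum_list_update)
  ultimately show ?case
    using IH by (simp del: sum_list_map_eq_sum_count) arith
qed

lemma dx_cong_degree: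
  assumes "is_xpoly F" "is_xpoly G" and "\<And>S. nleaves S = Suc (nleaves T) \<Longrightarrow> F S = G S"
  shows "dx F T = (dx G T :: 'a::comm_semiring_1)"
proof -
  let ?A = "supp F \<union> supp G"
  have A: "finite ?A" using assms(1,2) by (simp add: is_xpoly_def is_poly_def)
  have "F S * dx_tree S T = G S * dx_tree S T" if "S \<in> ?A" for S
  proof (cases "dx_tree S T = (0::'a)")
    case False
    have "allx S" "valid S" using that assms(1,2) by (auto dest: is_xpolyD is_polyD)
    then have "Suc (nleaves T) = nleaves S" using dx_tree_nonzero False by blast
    then show ?thesis using assms(3) by simp
  qed simp
  then show ?thesis
    using A by (simp add: dx_eq_sum[of ?A F] dx_eq_sum[of ?A G])
qed

lemma is_xpoly_dx:
  assumes "is_xpoly F"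
  shows "is_xpoly (dx F :: 'a::comm_semiring_1 ser)"
proof -
  have fin: "finite (supp F)" using assms by (simp add: is_xpoly_def is_poly_def)
  have "is_poly (\<lambda>T. \<Sum>S\<in>supp F. F S * dx_tree S T :: 'a)"
    using fin is_poly_dx_tree by (rule is_poly_sum)
  moreover have "allx T" if "(\<Sum>S\<in>supp F. F S * dx_tree S T) \<noteq> (0::'a)" for T
  proof -
    from that obtain S where S: "F S \<noteq> 0" "F S * dx_tree S T \<noteq> (0::'a)"
      by (auto elim: sum.not_neutral_contains_not_neutral)
    then have "allx S" "valid S" "dx_tree S T \<noteq> (0::'a)"
      using assms by (auto dest: is_xpolyD is_polyD)
    then show "allx T" by (blast dest: dx_tree_nonzero)
  qed
  ultimately show ?thesis by (simp add: dx_eq_sum_supp[OF fin] is_xpoly_def)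
qed

section \<open>Degrees\<close>

definition agree_below :: "nat \<Rightarrow> 'a ser \<Rightarrow> 'a ser \<Rightarrow> bool" where
  "agree_below K F G \<longleftrightarrow> (\<forall>T. nleaves T < K \<longrightarrow> F T = G T)"

definition no_constant_term :: "'a::zero ser \<Rightarrow> bool" where
  "no_constant_term a \<longleftrightarrow> (\<forall>T. a T \<noteq> 0 \<longrightarrow> 0 < nleaves T)"

lemma no_constant_term_y_ser: "no_constant_term y_ser"
  by (auto simp: no_constant_term_def y_ser_def)

lemma phi_tree_nonzero_nleaves_le:
  assumes "no_constant_term a" "no_constant_term b"
    and "phi_tree a b S T \<noteq> (0::'a::comm_semiring_1)"
  shows "nleaves S \<le> nleaves T"
  using assms(3)
proof (induction S arbitrary: T)
  case (Leaf x)
  then show ?case using assms(1,2) by (auto simp: no_constant_term_def split: if_splits)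
next
  case (Node ts)
  then obtain ss where ss: "ss \<in> factorizations (length ts) T"
    and nz: "\<And>i. i < length ts \<Longrightarrow> phi_tree a b (ts ! i) (ss ! i) \<noteq> 0"
    by (auto elim: prodm_nonzero_factorization)
  have "sum_list (map nleaves ts) \<le> sum_list (map nleaves ss)"
    unfolding sum_list_sum_nth using factorizationsD(1)[OF ss] nz Node.IH
    by (auto intro!: sum_mono)
  then show ?case using nleaves_bullet[of ss] factorizationsD(3)[OF ss] by simp
qed

lemma nat_list_eq_if_le_sum_eq:
  fixes xs ys :: "nat list"
  assumes "length ys = length xs" and "\<And>i. i < length xs \<Longrightarrow> xs ! i \<le> ys ! i"
    and "sum_list xs = sum_list ys"
  shows "xs = ys"
proof (rule ccontr)
  assume "xs \<noteq> ys"
  then obtain i where i: "i < length xs" "xs ! i \<noteq> ys ! i"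
    using assms(1) nth_equalityI by metis
  then have "xs ! i < ys ! i" using assms(2)[of i] by simp
  then have "(\<Sum>i\<in>{0..<length xs}. xs ! i) < (\<Sum>i\<in>{0..<length xs}. ys ! i)"
    using assms(2) i(1) by (intro sum_strict_mono_ex1) auto
  then show False using assms(1,3) by (simp add: sum_list_sum_nth)
qed

lemma prodm_lowest_degree:
  assumes "length fs = length ts" and "\<forall>t\<in>set ts. valid t"
    and low: "\<And>i s. i < length ts \<Longrightarrow> (fs ! i) s \<noteq> 0 \<Longrightarrow> nleaves (ts ! i) \<le> nleaves s"
    and lowest: "\<And>i s. i < length ts \<Longrightarrow> nleaves s = nleaves (ts ! i) \<Longrightarrow> (fs ! i) s = delta (ts ! i) s"
    and "nleaves T = sum_list (map nleaves ts)"
  shows "prodm fs T = (delta (bullet ts) T :: 'a::comm_semiring_1)"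
proof -
  let ?f = "\<lambda>ss. \<Prod>i<length ts. (fs ! i) (ss ! i) :: 'a"
  have only_ts: "ss = ts" if ss: "ss \<in> factorizations (length ts) T" and nz: "?f ss \<noteq> 0" for ss
  proof -
    have l: "length ss = length ts" using factorizationsD(1)[OF ss] .
    have nz_i: "(fs ! i) (ss ! i) \<noteq> 0" if "i < length ts" for i
      using nz that by (metis finite_lessThan lessThan_iff prod_zero)
    have "map nleaves ts = map nleaves ss"
    proof (rule nat_list_eq_if_le_sum_eq)
      show "sum_list (map nleaves ts) = sum_list (map nleaves ss)"
        using assms(5) nleaves_bullet[of ss] factorizationsD(3)[OF ss] by simp
    qed (use l nz_i low in auto)
    then have "nleaves (ss ! i) = nleaves (ts ! i)" if "i < length ts" for i
      using that l by (metis nth_map)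
    then have "ss ! i = ts ! i" if "i < length ts" for i
      using nz_i[OF that] lowest[OF that] that by (auto simp: delta_def split: if_splits)
    then show "ss = ts" using l by (intro nth_equalityI) auto
  qed
  have "prodm fs T = (\<Sum>ss\<in>factorizations (length ts) T. if ss = ts then ?f ts else 0)"
    unfolding prodm_eq_sum_factorizations assms(1) using only_ts by (intro sum.cong) auto
  also have "?f ts = 1"
    using lowest by (simp add: delta_def)
  also have "(\<Sum>ss\<in>factorizations (length ts) T. if ss = ts then 1 else 0) =
      (if ts \<in> factorizations (length ts) T then 1 else (0::'a))"
    using finite_factorizations by (simp add: sum.delta')
  also have "\<dots> = delta (bullet ts) T"
    using assms(2) by (auto simp: factorizations_def delta_def)
  finally show ?thesis .
qed

lemma phi_tree_lowest_degree:
  assumes "no_constant_term a" and "\<And>T. nleaves T = 1 \<Longrightarrow> a T = x_ser T" and "no_constant_term b"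
    and "allx S" "valid S" "nleaves T = nleaves S"
  shows "phi_tree a b S T = (delta S T :: 'a::comm_semiring_1)"
  using assms(4-)
proof (induction S arbitrary: T)
  case (Leaf x)
  then show ?case using assms(2) by (simp add: x_ser_def delta_def)
next
  case (Node ts)
  show ?case
  proof (cases "ts = []")
    case True
    then show ?thesis by (simp add: prodm_Nil one_ser_def delta_def oneP_def)
  next
    case False
    note ts = valid_NodeD[OF Node.prems(2) False]
    have "prodm (map (phi_tree a b) ts) T = delta (bullet ts) T"
      using Node ts phi_tree_nonzero_nleaves_le[OF assms(1,3)]
      by (intro prodm_lowest_degree) auto
    then show ?thesis using ts bullet_eq_Node[of ts] by simp
  qed
qed

lemma phi_tree_local:
  assumes "\<And>s. nleaves s \<le> nleaves T \<Longrightarrow> a s = a' s"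
  shows "phi_tree a b S T = (phi_tree a' b S T :: 'a::comm_semiring_1)"
  using assms
proof (induction S arbitrary: T)
  case (Node ts)
  have "prodm (map (phi_tree a b) ts) T = prodm (map (phi_tree a' b) ts) T"
    using Node by (intro prodm_local) auto
  then show ?case by simp
qed auto

(* With a = x + (higher terms), substitution does not lower degrees and fixes every tree of
   minimal degree. *)
lemma subst_lowest_degree:
  assumes "no_constant_term a" and "\<And>T. nleaves T = 1 \<Longrightarrow> a T = x_ser T" and "no_constant_term b"
    and "is_xpoly F" and "\<And>S. nleaves S < nleaves T \<Longrightarrow> F S = 0"
  shows "subst a b F T = (F T :: 'a::comm_semiring_1)"
proof -
  have fin: "finite (supp F)" using assms(4) by (simp add: is_xpoly_def is_poly_def)
  have "subst a b F T = (\<Sum>S\<in>supp F. F S * phi_tree a b S T)"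
    using fin by (intro subst_eq_sum) auto
  also have "\<dots> = (\<Sum>S\<in>supp F. F S * delta S T)"
  proof (rule sum.cong[OF refl])
    fix S assume S: "S \<in> supp F"
    then have "allx S" "valid S" using assms(4) by (auto dest: is_xpolyD is_polyD)
    moreover have "nleaves T \<le> nleaves S" using S assms(5) by (meson mem_Collect_eq not_le)
    ultimately have "phi_tree a b S T = delta S T"
    proof (cases "nleaves T = nleaves S")
      case False
      with \<open>nleaves T \<le> nleaves S\<close> have "\<not> nleaves S \<le> nleaves T" by simp
      then have "phi_tree a b S T = 0"
        using phi_tree_nonzero_nleaves_le[OF assms(1,3)] by blast
      moreover have "T \<noteq> S" using False by blast
      ultimately show ?thesis by (simp add: delta_def)
    qed (simp add: phi_tree_lowest_degree[OF assms(1-3)])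
    then show "F S * phi_tree a b S T = F S * delta S T" by simp
  qed
  also have "\<dots> = F T" using fin by (rule series_eq_sum_delta[symmetric]) simp
  finally show ?thesis .
qed

lemma subst_agree_below_zeroD:
  assumes "no_constant_term a" and "\<And>T. nleaves T = 1 \<Longrightarrow> a T = x_ser T" and "no_constant_term b"
    and "is_xpoly F" and "agree_below K (subst a b F) (\<lambda>_. 0 :: 'a::comm_semiring_1)"
  shows "agree_below K F (\<lambda>_. 0)"
proof -
  have "F T = 0" if "nleaves T < K" for T
    using that
  proof (induction "nleaves T" arbitrary: T rule: less_induct)
    case less
    then have "subst a b F T = F T"
      by (intro subst_lowest_degree[OF assms(1-4)]) auto
    then show ?case using assms(5) less.prems by (simp add: agree_below_def)
  qed
  then show ?thesis by (simp add: agree_below_def)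
qed

lemma subst_agree_belowD:
  assumes "no_constant_term a" and "\<And>T. nleaves T = 1 \<Longrightarrow> a T = x_ser T" and "no_constant_term b"
    and "is_xpoly F" "is_xpoly G" and "agree_below K (subst a b F) (subst a b (G :: 'a::comm_ring_1 ser))"
  shows "agree_below K F G"
proof -
  have fin: "finite (supp F)" "finite (supp G)"
    using assms(4,5) by (simp_all add: is_xpoly_def is_poly_def)
  have "subst a b (\<lambda>T. F T - G T) = (\<lambda>T. subst a b F T - subst a b G T)"
    using fin by (rule subst_diff)
  then have "agree_below K (subst a b (\<lambda>T. F T - G T)) (\<lambda>_. 0)"
    using assms(6) by (simp add: agree_below_def)
  with assms(4,5) have "agree_below K (\<lambda>T. F T - G T) (\<lambda>_. 0)"
    by (intro subst_agree_below_zeroD[OF assms(1-3) is_xpoly_diff])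
  then show ?thesis by (simp add: agree_below_def)
qed

lemma dx_agree_below:
  assumes "is_xpoly F" "is_xpoly G" and "agree_below (Suc K) F G"
  shows "agree_below K (dx F) (dx G :: 'a::comm_semiring_1 ser)"
  using assms(3) unfolding agree_below_def by (auto intro: dx_cong_degree[OF assms(1,2)])

lemma prodm_update_agree_below:
  assumes "agree_below K f g"
  shows "agree_below K (prodm (fs[i := f])) (prodm (fs[i := g]))"
  unfolding agree_below_def
proof (intro allI impI prodm_local)
  fix T j s assume "nleaves T < K" "nleaves s \<le> nleaves T"
  then show "(fs[i := f] ! j) s = (fs[i := g] ! j) s" if "j < length (fs[i := f])"
    using assms that by (cases "j = i") (auto simp: agree_below_def)
qed simp

section \<open>Truncation\<close>

definition trunc :: "nat \<Rightarrow> 'a::zero ser \<Rightarrow> 'a ser" where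
  "trunc N F = (\<lambda>T. if nleaves T \<le> N then F T else 0)"

lemma trunc_eq_sum_hcomp: "trunc N F = (\<lambda>T. \<Sum>j\<le>N. hcomp j F T :: 'a::comm_monoid_add)"
  by (auto simp: trunc_def hcomp_def fun_eq_iff)

lemma is_xpoly_hcomp:
  assumes "xseries E"
  shows "is_xpoly (hcomp j E)"
proof -
  have valid: "E T \<noteq> 0 \<Longrightarrow> valid T" and allx: "E T \<noteq> 0 \<Longrightarrow> allx T"
    and fin: "finite {T. degx T = j \<and> E T \<noteq> 0}" for T
    using assms by (auto simp: xseries_def series_def)
  have "supp (hcomp j E) \<subseteq> {T. degx T = j \<and> E T \<noteq> 0}"
    using allx by (auto simp: hcomp_def allx_degx_eq_nleaves split: if_splits)
  then have "finite (supp (hcomp j E))" using fin by (rule finite_subset)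
  moreover have "hcomp j E T \<noteq> 0 \<Longrightarrow> valid T \<and> allx T" for T
    using valid allx by (simp add: hcomp_def split: if_splits)
  ultimately show ?thesis by (simp add: is_xpoly_def is_poly_def)
qed

lemma is_xpoly_trunc:
  assumes "xseries F"
  shows "is_xpoly (trunc N F :: 'a::semiring_1 ser)"
proof -
  have "is_xpoly (\<lambda>T. \<Sum>j\<le>N. 1 * hcomp j F T :: 'a)"
    using assms by (intro is_xpoly_sum is_xpoly_hcomp) auto
  then show ?thesis by (simp add: trunc_eq_sum_hcomp)
qed

lemma no_constant_term_trunc: "no_constant_term F \<Longrightarrow> no_constant_term (trunc N F)"
  by (simp add: no_constant_term_def trunc_def)

lemma subst_trunc_agree_below:
  assumes "no_constant_term a" "no_constant_term b"
  shows "agree_below (Suc N) (subst (trunc N a) b (trunc N F)) (subst a b (F :: 'a::comm_semiring_1 ser))"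
  unfolding agree_below_def
proof (intro allI impI)
  fix T assume T: "nleaves T < Suc N"
  have "trunc N F S * phi_tree (trunc N a) b S T = F S * phi_tree a b S T" for S
  proof (cases "nleaves S \<le> nleaves T")
    case True
    then have "phi_tree (trunc N a) b S T = phi_tree a b S T"
      using T by (intro phi_tree_local) (simp add: trunc_def)
    then show ?thesis using True T by (simp add: trunc_def)
  next
    case False
    then show ?thesis
      using phi_tree_nonzero_nleaves_le[OF assms]
            phi_tree_nonzero_nleaves_le[OF no_constant_term_trunc[OF assms(1)] assms(2)]
      by (metis mult_zero_right)
  qed
  then show "subst (trunc N a) b (trunc N F) T = subst a b F T" by (simp add: subst_def)
qed

section \<open>The derivative of the exponential\<close>

definition weak_compositions :: "nat \<Rightarrow> nat \<Rightarrow> nat list set" where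
  "weak_compositions k n = {xs. length xs = k \<and> sum_list xs = n}"

lemma finite_weak_compositions: "finite (weak_compositions k n)"
proof (rule finite_subset)
  show "weak_compositions k n \<subseteq> {xs. set xs \<subseteq> {..n} \<and> length xs = k}"
    by (auto simp: weak_compositions_def member_le_sum_list)
qed (simp add: finite_lists_length_eq)

lemma weak_compositions_nth_le: "xs \<in> weak_compositions k n \<Longrightarrow> i < k \<Longrightarrow> xs ! i \<le> n"
  by (auto simp: weak_compositions_def elem_le_sum_list)

lemma sum_list_update_nat:
  "i < length xs \<Longrightarrow> sum_list (xs[i := x]) + xs ! i = sum_list xs + (x::nat)"
  using elem_le_sum_list[of i xs] by (simp add: sum_list_update)

lemma weak_compositions_decrement_bij:
  assumes "i < k"
  shows "bij_betw (\<lambda>xs. xs[i := xs ! i - 1])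
           {xs \<in> weak_compositions k (Suc m). 1 \<le> xs ! i} (weak_compositions k m)"
proof (rule bij_betw_byWitness[where f' = "\<lambda>xs. xs[i := xs ! i + 1]"])
  show "(\<lambda>xs. xs[i := xs ! i - 1]) ` {xs \<in> weak_compositions k (Suc m). 1 \<le> xs ! i}
      \<subseteq> weak_compositions k m"
  proof clarify
    fix xs assume "xs \<in> weak_compositions k (Suc m)" "1 \<le> xs ! i"
    then show "xs[i := xs ! i - 1] \<in> weak_compositions k m"
      using assms sum_list_update_nat[of i xs "xs ! i - 1"] by (simp add: weak_compositions_def)
  qed
  show "(\<lambda>xs. xs[i := xs ! i + 1]) ` weak_compositions k m
      \<subseteq> {xs \<in> weak_compositions k (Suc m). 1 \<le> xs ! i}"
  proof clarify
    fix xs assume "xs \<in> weak_compositions k m"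
    then show "xs[i := xs ! i + 1] \<in> weak_compositions k (Suc m) \<and> 1 \<le> xs[i := xs ! i + 1] ! i"
      using assms sum_list_update_nat[of i xs "xs ! i + 1"] by (simp add: weak_compositions_def)
  qed
qed (use assms in \<open>auto simp: weak_compositions_def\<close>)

lemma weak_compositions_nth_eq_sum:
  assumes "i < k"
  shows "{xs \<in> weak_compositions k n. xs ! i = n} = {(replicate k 0)[i := n]}"
proof -
  have "xs = (replicate k 0)[i := n]" if xs: "xs \<in> weak_compositions k n" "xs ! i = n" for xs
  proof -
    have l: "length xs = k" using xs(1) by (simp add: weak_compositions_def)
    have "sum_list (xs[i := 0]) = 0"
      using xs assms sum_list_update_nat[of i xs 0] by (simp add: weak_compositions_def)
    then have zero: "\<forall>x\<in>set (xs[i := 0]). x = 0" by (simp add: sum_list_eq_0_iff)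
    show ?thesis
    proof (rule nth_equalityI)
      fix j assume j: "j < length xs"
      show "xs ! j = (replicate k 0)[i := n] ! j"
      proof (cases "j = i")
        case False
        then have "xs ! j = xs[i := 0] ! j" by simp
        also have "\<dots> = 0" using zero j by simp
        finally show ?thesis using False j l by simp
      qed (use xs(2) l j in simp)
    qed (simp add: l)
  qed
  moreover have "(replicate k 0)[i := n] \<in> weak_compositions k n"
    using assms sum_list_update_nat[of i "replicate k 0" n] by (simp add: weak_compositions_def)
  moreover have "(replicate k 0)[i := n] ! i = n" using assms by simp
  ultimately show ?thesis by blast
qed

lemma is_Exp_rec:
  assumes "is_Exp k E"
  shows "of_nat k ^ n * hcomp n E T =
    (\<Sum>xs\<in>weak_compositions k n. prodm (map (\<lambda>i. hcomp i E) xs) T)"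
  using assms unfolding is_Exp_def weak_compositions_def by metis

lemma is_Exp_hcomp_0: "is_Exp k E \<Longrightarrow> hcomp 0 E = one_ser"
  and is_Exp_hcomp_1: "is_Exp k E \<Longrightarrow> hcomp 1 E = x_ser"
  and is_Exp_is_xpoly_hcomp: "is_Exp k E \<Longrightarrow> is_xpoly (hcomp j E)"
  by (simp_all add: is_Exp_def is_xpoly_hcomp)

lemma dx_is_Exp_rec:
  assumes "is_Exp k (E :: 'a::field_char_0 ser)"
  shows "of_nat k ^ n * dx (hcomp n E) T =
    (\<Sum>xs\<in>weak_compositions k n. \<Sum>i<k.
      prodm ((map (\<lambda>j. hcomp j E) xs)[i := dx (hcomp (xs ! i) E)]) T)"
proof -
  let ?f = "\<lambda>j. hcomp j E"
  let ?W = "weak_compositions k n"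
  have xp: "is_xpoly (?f j)" for j using is_Exp_is_xpoly_hcomp[OF assms] .
  have fin: "finite (supp (prodm (map ?f xs)))" for xs
    using xp by (intro is_polyD(1) is_poly_prodm) (auto dest: is_xpolyD)
  have "of_nat k ^ n * dx (?f n) T = dx (\<lambda>T. of_nat k ^ n * ?f n T) T"
    using xp by (subst dx_scale) (auto dest: is_xpolyD is_polyD)
  also have "\<dots> = dx (\<lambda>T. \<Sum>xs\<in>?W. 1 * prodm (map ?f xs) T) T"
    using is_Exp_rec[OF assms] by simp
  also have "\<dots> = (\<Sum>xs\<in>?W. 1 * dx (prodm (map ?f xs)) T)"
    by (subst dx_linear) (simp_all add: finite_weak_compositions fin)
  also have "\<dots> = (\<Sum>xs\<in>?W. \<Sum>i<k. prodm ((map ?f xs)[i := dx (?f (xs ! i))]) T)"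
    using xp by (intro sum.cong refl) (simp add: dx_prodm weak_compositions_def)
  finally show ?thesis .
qed

lemma sum_weak_compositions_prodm_lower:
  assumes "is_Exp k (E :: 'a::field_char_0 ser)" and "i < k"
  shows "(\<Sum>xs\<in>weak_compositions k (Suc m).
            prodm ((map (\<lambda>j. hcomp j E) xs)
              [i := (case xs ! i of 0 \<Rightarrow> (\<lambda>_. 0) | Suc j \<Rightarrow> hcomp j E)]) T)
         = of_nat k ^ m * hcomp m E T"
proof -
  let ?f = "\<lambda>j. hcomp j E"
  let ?W = "weak_compositions k (Suc m)"
  let ?lower = "\<lambda>j. case j of 0 \<Rightarrow> (\<lambda>_. 0) | Suc j \<Rightarrow> ?f j"
  have "(\<Sum>xs\<in>?W. prodm ((map ?f xs)[i := ?lower (xs ! i)]) T) =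
        (\<Sum>xs\<in>{xs \<in> ?W. 1 \<le> xs ! i}. prodm ((map ?f xs)[i := ?lower (xs ! i)]) T)"
  proof (rule sum.mono_neutral_right[OF finite_weak_compositions])
    show "\<forall>xs\<in>?W - {xs \<in> ?W. 1 \<le> xs ! i}. prodm ((map ?f xs)[i := ?lower (xs ! i)]) T = 0"
    proof
      fix xs assume "xs \<in> ?W - {xs \<in> ?W. 1 \<le> xs ! i}"
      then have "xs ! i = 0" "i < length (map ?f xs)"
        using assms(2) by (auto simp: weak_compositions_def)
      then show "prodm ((map ?f xs)[i := ?lower (xs ! i)]) T = 0"
        by (simp add: prodm_update_zero)
    qed
  qed auto
  also have "\<dots> = (\<Sum>xs\<in>{xs \<in> ?W. 1 \<le> xs ! i}. prodm (map ?f (xs[i := xs ! i - 1])) T)"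
    by (intro sum.cong refl) (auto simp: map_update split: nat.split)
  also have "\<dots> = (\<Sum>xs\<in>weak_compositions k m. prodm (map ?f xs) T)"
    by (rule sum.reindex_bij_betw[OF weak_compositions_decrement_bij[OF assms(2)]])
  also have "\<dots> = of_nat k ^ m * hcomp m E T"
    using is_Exp_rec[OF assms(1)] by simp
  finally show ?thesis .
qed

lemma sum_weak_compositions_prodm_top:
  assumes "is_Exp k (E :: 'a::field_char_0 ser)" and "i < k" and "is_poly R"
  shows "(\<Sum>xs\<in>weak_compositions k n.
            (if xs ! i = n then 1 else 0) * prodm ((map (\<lambda>j. hcomp j E) xs)[i := R]) T) = R T"
proof -
  have "(\<Sum>xs\<in>weak_compositions k n. (if xs ! i = n then 1 else 0) *
        prodm ((map (\<lambda>j. hcomp j E) xs)[i := R]) T) =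
        (\<Sum>xs\<in>{xs \<in> weak_compositions k n. xs ! i = n}.
        prodm ((map (\<lambda>j. hcomp j E) xs)[i := R]) T)"
    by (simp add: sum.inter_filter finite_weak_compositions if_distrib[of "\<lambda>c. c * _"] cong: if_cong)
  also have "\<dots> = prodm ((replicate k one_ser)[i := R]) T"
    using assms(2) is_Exp_hcomp_0[OF assms(1)]
    by (simp add: weak_compositions_nth_eq_sum map_update)
  also have "\<dots> = R T"
    by (simp add: prodm_replicate_one_ser_update[OF assms(2,3)])
  finally show ?thesis .
qed

lemma of_nat_power_neq_self:
  assumes "2 \<le> k" and "2 \<le> n"
  shows "(of_nat k ^ n :: 'a::semiring_char_0) \<noteq> of_nat k"
proof -
  have "k ^ 1 < k ^ n" using assms by (intro power_strict_increasing) auto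
  then show ?thesis by (metis of_nat_eq_iff of_nat_power power_one_right less_irrefl)
qed

(* Leibniz applied to the recursion for k^(m+1) f_(m+1) gives k^(m+1) f_m, by the recursion in
   degree m, plus the k terms in which one factor has degree m + 1; these contribute k R for the
   defect R = d/dx f_(m+1) - f_m. *)
lemma dx_hcomp_Suc_Exp_defect:
  assumes "is_Exp k (E :: 'a::field_char_0 ser)"
    and IH: "\<And>j. j < m \<Longrightarrow> dx (hcomp (Suc j) E) = hcomp j E"
  defines "R \<equiv> \<lambda>T. dx (hcomp (Suc m) E) T - hcomp m E T"
  shows "of_nat k ^ Suc m * dx (hcomp (Suc m) E) T = of_nat k ^ Suc m * hcomp m E T + of_nat k * R T"
proof -
  let ?f = "\<lambda>j. hcomp j E"
  let ?lower = "\<lambda>j. case j of 0 \<Rightarrow> (\<lambda>_. 0) | Suc j \<Rightarrow> ?f j"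
  let ?W = "weak_compositions k (Suc m)"
  have R: "is_poly R"
    unfolding R_def using is_Exp_is_xpoly_hcomp[OF assms(1)]
    by (intro is_xpolyD(1) is_xpoly_diff is_xpoly_dx)
  have dx_f: "dx (?f j) = (\<lambda>T. ?lower j T + (if j = Suc m then 1 else 0) * R T)"
    if "j \<le> Suc m" for j
  proof (cases j)
    case 0
    then show ?thesis using is_Exp_hcomp_0[OF assms(1)] by (simp add: dx_one_ser)
  next
    case (Suc j')
    then show ?thesis using IH[of j'] that by (auto simp: R_def)
  qed
  have split: "prodm ((map ?f xs)[i := dx (?f (xs ! i))]) T = prodm ((map ?f xs)[i := ?lower (xs ! i)]) T
      + (if xs ! i = Suc m then 1 else 0) * prodm ((map ?f xs)[i := R]) T"
    if "xs \<in> ?W" "i < k" for xs i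
  proof -
    have "dx (?f (xs ! i)) = (\<lambda>T. ?lower (xs ! i) T + (if xs ! i = Suc m then 1 else 0) * R T)"
      using weak_compositions_nth_le[OF that] by (rule dx_f)
    moreover have "i < length (map ?f xs)" using that by (simp add: weak_compositions_def)
    ultimately show ?thesis by (simp only: prodm_update_add)
  qed
  have "of_nat k ^ Suc m * dx (?f (Suc m)) T =
      (\<Sum>xs\<in>?W. \<Sum>i<k. prodm ((map ?f xs)[i := ?lower (xs ! i)]) T +
          (if xs ! i = Suc m then 1 else 0) * prodm ((map ?f xs)[i := R]) T)"
    unfolding dx_is_Exp_rec[OF assms(1)] by (intro sum.cong refl) (simp add: split)
  also have "\<dots> = (\<Sum>i<k. \<Sum>xs\<in>?W. prodm ((map ?f xs)[i := ?lower (xs ! i)]) T) +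
      (\<Sum>i<k. \<Sum>xs\<in>?W. (if xs ! i = Suc m then 1 else 0) * prodm ((map ?f xs)[i := R]) T)"
    by (simp only: sum.distrib sum.swap[of _ _ ?W])
  also have "\<dots> = (\<Sum>i<k. of_nat k ^ m * ?f m T) + (\<Sum>i<k. R T)"
    using sum_weak_compositions_prodm_lower[OF assms(1)] sum_weak_compositions_prodm_top[OF assms(1) _ R]
    by simp
  finally show ?thesis by simp
qed

theorem dx_hcomp_Suc_Exp:
  assumes "2 \<le> k" and "is_Exp k (E :: 'a::field_char_0 ser)"
  shows "dx (hcomp (Suc m) E) = hcomp m E"
proof (induction m rule: less_induct)
  case (less m)
  show ?case
  proof (cases m)
    case 0
    then show ?thesis
      using is_Exp_hcomp_0[OF assms(2)] is_Exp_hcomp_1[OF assms(2)] dx_x_ser by (metis One_nat_def)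
  next
    case (Suc m')
    let ?R = "\<lambda>T. dx (hcomp (Suc m) E) T - hcomp m E T"
    have "(of_nat k ^ Suc m - of_nat k) * ?R T = 0" for T
      using dx_hcomp_Suc_Exp_defect[OF assms(2) less, where T = T] by (simp add: algebra_simps)
    moreover have "(of_nat k ^ Suc m :: 'a) \<noteq> of_nat k"
      using assms(1) Suc by (intro of_nat_power_neq_self) auto
    ultimately have "?R T = 0" for T by simp
    then show ?thesis by (simp add: fun_eq_iff)
  qed
qed

lemma dx_trunc_Exp:
  assumes "2 \<le> k" and "is_Exp k (E :: 'a::field_char_0 ser)"
  shows "dx (trunc (Suc N) E) = trunc N E"
proof -
  have "dx (trunc (Suc N) E) = dx (\<lambda>T. \<Sum>j\<le>Suc N. 1 * hcomp j E T)"
    by (simp add: trunc_eq_sum_hcomp)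
  also have "\<dots> = (\<lambda>T. \<Sum>j\<le>Suc N. 1 * dx (hcomp j E) T)"
    using is_Exp_is_xpoly_hcomp[OF assms(2)] by (intro dx_linear) (auto dest: is_xpolyD is_polyD)
  also have "\<dots> = (\<lambda>T. \<Sum>j\<le>N. 1 * hcomp j E T)"
    using dx_hcomp_Suc_Exp[OF assms] is_Exp_hcomp_0[OF assms(2)]
    by (simp add: sum.atMost_Suc_shift dx_one_ser del: sum.atMost_Suc)
  finally show ?thesis by (simp add: trunc_eq_sum_hcomp)
qed

lemma Exp_minus_one_ser_low_degrees:
  assumes "is_Exp k E"
  shows "nleaves T = 0 \<Longrightarrow> E T - one_ser T = 0"
    and "nleaves T = 1 \<Longrightarrow> E T - one_ser T = x_ser T"
proof -
  have "E T = hcomp (nleaves T) E T" by (simp add: hcomp_def)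
  then show "nleaves T = 0 \<Longrightarrow> E T - one_ser T = 0"
      "nleaves T = 1 \<Longrightarrow> E T - one_ser T = x_ser T"
    using is_Exp_hcomp_0[OF assms] is_Exp_hcomp_1[OF assms] by (auto simp: one_ser_def)
qed

lemma trunc_Exp_minus_one_ser:
  fixes n :: nat and E :: "'a::field_char_0 ser"
  assumes "2 \<le> k" and "is_Exp k E"
  defines "U \<equiv> trunc (Suc n) (\<lambda>T. E T - one_ser T)"
  shows "is_xpoly U" and "no_constant_term U" and "\<And>T. nleaves T = 1 \<Longrightarrow> U T = x_ser T"
    and "agree_below (Suc n) (dx U) (\<lambda>T. one_ser T + U T)"
proof -
  have U: "U = (\<lambda>T. trunc (Suc n) E T - one_ser T)"
    by (auto simp: U_def trunc_def one_ser_def fun_eq_iff)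
  have xE: "xseries E" using assms(2) by (simp add: is_Exp_def)
  show "is_xpoly U"
    unfolding U using is_xpoly_trunc[OF xE] is_xpoly_one_ser by (rule is_xpoly_diff)
  show "no_constant_term U"
    using Exp_minus_one_ser_low_degrees(1)[OF assms(2)] by (auto simp: U_def trunc_def no_constant_term_def)
  show "U T = x_ser T" if "nleaves T = 1" for T
    using Exp_minus_one_ser_low_degrees(2)[OF assms(2) that] that by (simp add: U_def trunc_def)
  have fin: "finite (supp (trunc (Suc n) E))" "finite (supp (one_ser :: 'a ser))"
    using is_xpoly_trunc[OF xE] is_xpoly_one_ser by (auto dest: is_xpolyD is_polyD)
  have "dx U = (\<lambda>T. dx (trunc (Suc n) E) T - dx one_ser T)"
    unfolding U by (rule dx_diff[OF fin])
  also have "\<dots> = trunc n E"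
    by (simp add: dx_trunc_Exp[OF assms(1,2)] dx_one_ser)
  finally have "dx U = trunc n E" .
  then show "agree_below (Suc n) (dx U) (\<lambda>T. one_ser T + U T)"
    by (simp add: agree_below_def U trunc_def)
qed

section \<open>The chain rule and the logarithm\<close>

lemma subst_dx_tree_Node:
  assumes "allx (Node ts)" "\<forall>t\<in>set ts. valid t" and "is_poly a" "is_poly b"
  shows "subst a b (dx_tree (Node ts)) T =
    (\<Sum>i<length ts.
      prodm ((map (phi_tree a b) ts)[i := subst a b (dx_tree (ts ! i))]) T :: 'a::comm_semiring_1)"
proof -
  let ?L = "\<lambda>i. (map delta ts)[i := dx_tree (ts ! i)] :: 'a ser list"
  have L: "\<forall>g\<in>set (?L i). is_poly g" for i
  proof
    fix g assume "g \<in> set (?L i)"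
    then have "g = dx_tree (ts ! i) \<or> g \<in> delta ` set ts"
      using set_update_subset_insert[of "map delta ts" i] by auto
    then show "is_poly g" using assms(2) by (auto simp: is_poly_dx_tree is_poly_delta)
  qed
  have "subst a b (dx_tree (Node ts)) = subst a b (\<lambda>T. \<Sum>i<length ts. 1 * prodm (?L i) T)"
    by (simp add: dx_tree_Node[OF assms(1,2)])
  also have "\<dots> = (\<lambda>T. \<Sum>i<length ts. 1 * subst a b (prodm (?L i)) T)"
    using L by (intro subst_linear) (auto intro: is_polyD(1) is_poly_prodm)
  also have "\<dots> = (\<lambda>T. \<Sum>i<length ts.
      prodm ((map (phi_tree a b) ts)[i := subst a b (dx_tree (ts ! i))]) T)"
    using L assms(3,4) by (simp add: subst_prodm map_update comp_def subst_delta)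
  finally show ?thesis by simp
qed

lemma dx_prodm_agree_below:
  assumes "\<forall>f\<in>set fs. is_xpoly f"
    and "\<And>i. i < length fs \<Longrightarrow> agree_below M (dx (fs ! i)) (\<lambda>T. g i T + c i * (fs ! i) T)"
  shows "agree_below M (dx (prodm fs))
           (\<lambda>T. (\<Sum>i<length fs. prodm (fs[i := g i]) T) + (\<Sum>i<length fs. c i) * prodm fs T
             :: 'a::comm_semiring_1)"
  unfolding agree_below_def
proof (intro allI impI)
  fix T assume T: "nleaves T < M"
  have "dx (prodm fs) T = (\<Sum>i<length fs. prodm (fs[i := dx (fs ! i)]) T)"
    using dx_prodm[OF assms(1)] by simp
  also have "\<dots> = (\<Sum>i<length fs. prodm (fs[i := (\<lambda>T. g i T + c i * (fs ! i) T)]) T)"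
  proof (rule sum.cong[OF refl])
    fix i assume "i \<in> {..<length fs}"
    then have "agree_below M (prodm (fs[i := dx (fs ! i)])) (prodm (fs[i := (\<lambda>T. g i T + c i * (fs ! i) T)]))"
      using assms(2) by (intro prodm_update_agree_below) simp
    then show "prodm (fs[i := dx (fs ! i)]) T = prodm (fs[i := (\<lambda>T. g i T + c i * (fs ! i) T)]) T"
      using T by (simp add: agree_below_def)
  qed
  also have "\<dots> = (\<Sum>i<length fs. prodm (fs[i := g i]) T + c i * prodm fs T)"
    by (intro sum.cong refl) (simp add: prodm_update_add)
  finally show "dx (prodm fs) T =
      (\<Sum>i<length fs. prodm (fs[i := g i]) T) + (\<Sum>i<length fs. c i) * prodm fs T"
    by (simp add: sum.distrib sum_distrib_right)
qed

(* Chain rule: since d/dx U = 1 + U, differentiating an x-leaf of S either deletes it (the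
   term 1, giving subst U b (dx_tree S)) or leaves it in place (the term U, once per leaf). *)
lemma dx_phi_tree_agree_below:
  assumes "is_xpoly U" "is_poly b" and dU: "agree_below M (dx U) (\<lambda>T. one_ser T + U T)"
    and "allx S" "valid S"
  shows "agree_below M (dx (phi_tree U b S))
           (\<lambda>T. subst U b (dx_tree S) T + of_nat (nleaves S) * phi_tree U b S T :: 'a::comm_semiring_1)"
  using assms(4,5)
proof (induction S)
  case (Leaf x)
  then show ?case using dU by (simp add: dx_tree_Leaf_X subst_one_ser)
next
  case (Node ts)
  show ?case
  proof (cases "ts = []")
    case True
    then show ?thesis
      by (simp add: oneP_def[symmetric] phi_tree_oneP dx_one_ser dx_tree_oneP subst_zero agree_below_def)
  next
    case False
    have ts: "\<forall>t\<in>set ts. valid t" "\<forall>t\<in>set ts. allx t"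
      using valid_NodeD[OF Node.prems(2) False] Node.prems(1) by auto
    let ?fs = "map (phi_tree U b) ts"
    have "agree_below M (dx (prodm ?fs))
        (\<lambda>T. (\<Sum>i<length ?fs. prodm (?fs[i := subst U b (dx_tree (ts ! i))]) T)
          + (\<Sum>i<length ?fs. of_nat (nleaves (ts ! i))) * prodm ?fs T)"
      using Node.IH ts assms(1,2) by (intro dx_prodm_agree_below) (auto intro: is_xpoly_phi_tree)
    then show ?thesis
      using Node.prems(1) ts assms(1,2)
      by (simp add: subst_dx_tree_Node is_xpolyD sum_list_sum_nth atLeast0LessThan)
  qed
qed

definition euler :: "'a::semiring_1 ser \<Rightarrow> 'a ser" where
  "euler F = (\<lambda>T. of_nat (nleaves T) * F T)"

lemma is_xpoly_euler: "is_xpoly F \<Longrightarrow> is_xpoly (euler F)"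
  by (rule is_xpoly_supp_subset) (auto simp: euler_def)

lemma subst_dx_eq_sum:
  assumes "finite (supp H)"
  shows "subst a b (dx H) = (\<lambda>T. \<Sum>S\<in>supp H. H S * subst a b (dx_tree S) T :: 'a::comm_semiring_1)"
proof -
  have "subst a b (dx H) = subst a b (\<lambda>T. \<Sum>S\<in>supp H. H S * dx_tree S T)"
    by (simp add: dx_eq_sum_supp[OF assms])
  also have "\<dots> = (\<lambda>T. \<Sum>S\<in>supp H. H S * subst a b (dx_tree S) T)"
    using assms by (intro subst_linear) (auto intro: is_polyD(1) is_poly_dx_tree)
  finally show ?thesis .
qed

lemma dx_subst_agree_below:
  assumes "is_xpoly U" "is_poly b" and "agree_below M (dx U) (\<lambda>T. one_ser T + U T)"
    and "is_xpoly H"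
  shows "agree_below M (dx (subst U b H)) (subst U b (\<lambda>T. dx H T + euler H T) :: 'a::comm_semiring_1 ser)"
  unfolding agree_below_def
proof (intro allI impI)
  fix T assume T: "nleaves T < M"
  let ?phi = "phi_tree U b"
  have fin: "finite (supp H)" "finite (supp (euler H))" "finite (supp (dx H))"
    using assms(4) is_xpoly_euler is_xpoly_dx by (blast dest: is_xpolyD is_polyD)+
  have phi: "is_poly (?phi S)" for S using assms(1,2) by (intro is_poly_phi_tree) (auto dest: is_xpolyD)
  have "subst U b H = (\<lambda>T. \<Sum>S\<in>supp H. H S * ?phi S T)"
    using fin by (intro ext subst_eq_sum) auto
  then have "dx (subst U b H) = dx (\<lambda>T. \<Sum>S\<in>supp H. H S * ?phi S T)"
    by simp
  also have "\<dots> = (\<lambda>T. \<Sum>S\<in>supp H. H S * dx (?phi S) T)"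
    using fin phi by (intro dx_linear) (auto dest: is_polyD)
  finally have "dx (subst U b H) T = (\<Sum>S\<in>supp H. H S * dx (?phi S) T)" by simp
  also have "\<dots> = (\<Sum>S\<in>supp H. H S * subst U b (dx_tree S) T + euler H S * ?phi S T)"
  proof (rule sum.cong[OF refl])
    fix S assume "S \<in> supp H"
    then have "allx S" "valid S" using assms(4) by (auto dest: is_xpolyD is_polyD)
    then have "dx (?phi S) T = subst U b (dx_tree S) T + of_nat (nleaves S) * ?phi S T"
      using dx_phi_tree_agree_below[OF assms(1-3)] T by (simp add: agree_below_def)
    then show "H S * dx (?phi S) T = H S * subst U b (dx_tree S) T + euler H S * ?phi S T"
      by (simp add: euler_def algebra_simps)
  qed
  also have "\<dots> = subst U b (dx H) T + subst U b (euler H) T"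
  proof -
    have "subst U b (euler H) T = (\<Sum>S\<in>supp H. euler H S * ?phi S T)"
      using fin by (intro subst_eq_sum) (auto simp: euler_def)
    then show ?thesis using fin by (simp add: sum.distrib subst_dx_eq_sum)
  qed
  also have "\<dots> = subst U b (\<lambda>T. dx H T + euler H T) T"
    using fin by (simp add: subst_add)
  finally show "dx (subst U b H) T = subst U b (\<lambda>T. dx H T + euler H T) T" .
qed

lemma trunc_Log_equation:
  fixes n :: nat
  assumes "2 \<le> k" and "is_Exp k E" and "is_Log k E h"
  defines "H \<equiv> trunc (Suc n) h"
  shows "agree_below (Suc n) (\<lambda>T. dx H T + euler H T) one_ser"
proof -
  define u where "u = (\<lambda>T. E T - one_ser T)"
  define U where "U = trunc (Suc n) u"
  note U = trunc_Exp_minus_one_ser[OF assms(1,2), where n = n, folded u_def, folded U_def]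
  have xh: "xseries h" and log: "subst u y_ser h = x_ser"
    using assms(3) by (simp_all add: is_Log_def u_def)
  have H: "is_xpoly H" unfolding H_def using xh by (rule is_xpoly_trunc)
  have "no_constant_term u"
    using Exp_minus_one_ser_low_degrees(1)[OF assms(2)] by (auto simp: u_def no_constant_term_def)
  then have "agree_below (Suc (Suc n)) (subst U y_ser H) x_ser"
    using subst_trunc_agree_below[of u y_ser "Suc n" h] no_constant_term_y_ser
    by (simp add: U_def H_def log)
  then have "agree_below (Suc n) (dx (subst U y_ser H)) (subst U y_ser one_ser)"
    using dx_agree_below[OF is_xpoly_subst[OF H U(1) is_poly_y_ser] is_xpoly_x_ser]
    by (simp add: dx_x_ser subst_one_ser)
  moreover have "agree_below (Suc n) (dx (subst U y_ser H)) (subst U y_ser (\<lambda>T. dx H T + euler H T))"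
    using dx_subst_agree_below[OF U(1) is_poly_y_ser U(4) H] .
  ultimately have "agree_below (Suc n) (subst U y_ser (\<lambda>T. dx H T + euler H T)) (subst U y_ser one_ser)"
    by (simp add: agree_below_def)
  moreover have "is_xpoly (\<lambda>T. dx H T + euler H T)"
    using H by (intro is_xpoly_add is_xpoly_dx is_xpoly_euler)
  ultimately show ?thesis
    using subst_agree_belowD[OF U(2,3) no_constant_term_y_ser _ is_xpoly_one_ser] by blast
qed

lemma dx_hcomp_Suc_Log:
  assumes "2 \<le> k" and "is_Exp k E" and "is_Log k E h" and "1 \<le> n"
  shows "dx (hcomp (Suc n) h) T = - of_nat n * hcomp n h T"
proof -
  have xh: "xseries h" using assms(3) by (simp add: is_Log_def)
  show ?thesis
  proof (cases "nleaves T = n")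
    case True
    let ?H = "trunc (Suc n) h"
    have "dx ?H T = dx (hcomp (Suc n) h) T"
      using xh True by (intro dx_cong_degree is_xpoly_trunc is_xpoly_hcomp)
        (auto simp: hcomp_def trunc_def)
    moreover have "dx ?H T + euler ?H T = 0"
      using trunc_Log_equation[OF assms(1-3), where n = n] True assms(4)
      by (auto simp: agree_below_def one_ser_def)
    ultimately show ?thesis
      using True by (simp add: euler_def hcomp_def trunc_def eq_neg_iff_add_eq_0)
  next
    case False
    have "dx (hcomp (Suc n) h) T = dx (\<lambda>_. 0) T"
      using xh False by (intro dx_cong_degree is_xpoly_hcomp) (auto simp: hcomp_def is_xpoly_def is_poly_def)
    then show ?thesis using False by (simp add: dx_zero hcomp_def)
  qed
qed

theorem corollary7p3:
  fixes k :: nat and E h :: "'a::field_char_0 ser"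
  assumes "k \<ge> 2" and "is_Exp k E" and "is_Log k E h"
  shows "hcomp 0 h = (\<lambda>T. 0) \<and>
         (\<forall>n\<ge>1. dx (hcomp (Suc n) h) = (\<lambda>T. - (of_nat n) * hcomp n h T))"
proof
  have "h oneP = 0" and "h T \<noteq> 0 \<Longrightarrow> valid T" for T
    using assms(3) by (auto simp: is_Log_def xseries_def series_def)
  then show "hcomp 0 h = (\<lambda>T. 0)"
    by (auto simp: hcomp_def fun_eq_iff dest: valid_nleaves_eq_0)
  show "\<forall>n\<ge>1. dx (hcomp (Suc n) h) = (\<lambda>T. - (of_nat n) * hcomp n h T)"
    using dx_hcomp_Suc_Log[OF assms] by auto
qed

end
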